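(* Let $\mathscr{D}$ be a nonnegative integer-valued random variable with $\mathbb{P}(\mathscr{D}>t)=\mathcal{L}(t)t^{-\gamma}$, $\mathcal{L}$ slowly varying, $1<\gamma<2$, $\mu=\mathbb{E}[\mathscr D]$. Let $D_1,\dots,D_n$ be i.i.d. copies and $\widehat G_n$ the erased configuration model with these degrees. For $\varepsilon>0$ let $B_n(\varepsilon)=[\varepsilon\sqrt{\mu n},\sqrt{\mu n}/\varepsilon]$ and let $\triangle_n(\bar B_n(\varepsilon))=\sum_{1\le i<j<k\le n}\widehat X_{ij}\widehat X_{jk}\widehat X_{ik}\mathbf 1\{D_i\notin B_n(\varepsilon)\text{ or }D_j\notin B_n(\varepsilon)\text{ or }D_k\notin B_n(\varepsilon)\}$ be the number of triangles of $\widehat G_n$ with at least one sampled degree outside $B_n(\varepsilon)$. Then there is a function $\mathcal E_1(\varepsilon)$, not depending on $n$, with $\mathcal E_1(\varepsilon)\to0$ as $\varepsilon\to0$, such that \[ \limsup_{n\to\infty}\frac{\mathbb E[\triangle_n(\bar B_n(\varepsilon))]}{\mathcal L(\sqrt{\mu n})^3n^{\frac32(2-\gamma)}}=O(\mathcal E_1(\varepsilon)). \]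
   Context: Configuration model: vertex $i$ gets $D_i$ half-edges (one added if the sum is odd; ignored), paired uniformly at random; the erased configuration model removes self-loops and merges multiple edges, with $\widehat X_{ij}\in\{0,1\}$ its edge indicators. The $D_i$ are the sampled degrees (of the configuration model before erasure). *)

theory Defs
  imports "HOL-Probability.Probability"
begin

definition slowly_varying :: "(real \<Rightarrow> real) \<Rightarrow> bool" where
  "slowly_varying L \<longleftrightarrow> (\<forall>c>0. ((\<lambda>t. L (c * t) / L t) \<longlongrightarrow> 1) at_top)"

text \<open>Configuration model on vertices 0..n-1 with degrees d: if the total degree is odd,
  one extra half-edge is added (to vertex 0).\<close>
definition deg_ext :: "nat \<Rightarrow> (nat \<Rightarrow> nat) \<Rightarrow> nat \<Rightarrow> nat" where
  "deg_ext n d i = d i + (if i = 0 \<and> odd (\<Sum>j<n. d j) then 1 else 0)"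

definition half_edges :: "nat \<Rightarrow> (nat \<Rightarrow> nat) \<Rightarrow> (nat \<times> nat) set" where
  "half_edges n d = {(i, k). i < n \<and> k < deg_ext n d i}"

text \<open>Perfect matchings (pairings) of a set H of half-edges, as fixed-point-free
  involutions of H, extended by the identity outside H.\<close>
definition matchings :: "('h set) \<Rightarrow> ('h \<Rightarrow> 'h) set" where
  "matchings H = {m. (\<forall>h\<in>H. m h \<in> H \<and> m h \<noteq> h \<and> m (m h) = h) \<and> (\<forall>h. h \<notin> H \<longrightarrow> m h = h)}"

definition cm_model :: "nat \<Rightarrow> nat pmf \<Rightarrow> ((nat \<Rightarrow> nat) \<times> (nat \<times> nat \<Rightarrow> nat \<times> nat)) pmf" where
  "cm_model n p =
     Pi_pmf {..<n} 0 (\<lambda>_. p) \<bind>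
       (\<lambda>d. pmf_of_set (matchings (half_edges n d)) \<bind> (\<lambda>m. return_pmf (d, m)))"

text \<open>Edge indicator of the erased configuration model: no self-loops, multi-edges merged.\<close>
definition ecm_edge :: "nat \<Rightarrow> (nat \<Rightarrow> nat) \<Rightarrow> (nat \<times> nat \<Rightarrow> nat \<times> nat) \<Rightarrow> nat \<Rightarrow> nat \<Rightarrow> real" where
  "ecm_edge n d m i j =
     (if i \<noteq> j \<and> (\<exists>k l. (i, k) \<in> half_edges n d \<and> (j, l) \<in> half_edges n d \<and> m (i, k) = (j, l))
      then 1 else 0)"

definition Bn :: "real \<Rightarrow> nat \<Rightarrow> real \<Rightarrow> real set" where
  "Bn mu n eps = {eps * sqrt (mu * real n) .. sqrt (mu * real n) / eps}"

definition tri_out :: "real \<Rightarrow> nat \<Rightarrow> real \<Rightarrow> (nat \<Rightarrow> nat) \<Rightarrow> (nat \<times> nat \<Rightarrow> nat \<times> nat) \<Rightarrow> real" where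
  "tri_out mu n eps d m =
     (\<Sum>i<n. \<Sum>j\<in>{i<..<n}. \<Sum>k\<in>{j<..<n}.
        ecm_edge n d m i j * ecm_edge n d m j k * ecm_edge n d m i k *
        (if real (d i) \<notin> Bn mu n eps \<or> real (d j) \<notin> Bn mu n eps \<or> real (d k) \<notin> Bn mu n eps
         then 1 else 0))"

end

theory Submission
  imports Defs "HOL-Combinatorics.Transposition" "HOL-Real_Asymp.Real_Asymp"
begin

text \<open>Conditionally on the degrees, a uniform pairing contains a prescribed set of at most three
  edges with probability at most the product of \<open>D_a D_b / (\<ell> - 5)\<close> over these edges, \<open>\<ell>\<close> being
  the number of half-edges. Outside the exponentially unlikely event that the total degree is below
  \<open>\<mu> n / 2\<close>, a triangle \<open>ijk\<close> therefore contributes at most the product of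
  \<open>min(1, 4 (D_a + 1)(D_b + 1) / s\<^sup>2)\<close> over its edges, where \<open>s = \<surd>(\<mu> n)\<close>. Each factor
  \<open>min(1, x)\<close> is bounded by a power \<open>x\<^sup>a\<close>, \<open>0 \<le> a \<le> 1\<close>, with exponents chosen according to whether
  each degree lies below or above \<open>s\<close>; by independence the expectation factorises into truncated
  moments of the degree distribution. Potter bounds for the regularly varying tail
  \<open>P(D > t) = L(t) t\<^sup>-\<^sup>\<gamma>\<close> bound each moment by a constant times \<open>P(D > s)\<close>, and the factor belonging
  to a degree outside \<open>[\<epsilon> s, s / \<epsilon>]\<close> by \<open>\<epsilon>\<^sup>\<delta> P(D > s)\<close>. Summing over the \<open>n\<^sup>3\<close> triples gives
  \<open>O(\<epsilon>\<^sup>\<delta> n\<^sup>3 P(D > s)\<^sup>3) = O(\<epsilon>\<^sup>\<delta> L(s)\<^sup>3 n\<^bsup>3(2-\<gamma>)/2\<^esup>)\<close>.\<close>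

section \<open>Counting pairings with prescribed pairs\<close>

lemma matchingsD:
  assumes "m \<in> matchings H"
  shows "\<And>h. h \<in> H \<Longrightarrow> m h \<in> H" "\<And>h. h \<in> H \<Longrightarrow> m h \<noteq> h" "\<And>h. h \<in> H \<Longrightarrow> m (m h) = h"
    "\<And>h. h \<notin> H \<Longrightarrow> m h = h"
  using assms by (auto simp: matchings_def)

definition conj_transpose :: "'a \<Rightarrow> 'a \<Rightarrow> ('a \<Rightarrow> 'a) \<Rightarrow> 'a \<Rightarrow> 'a" where
  "conj_transpose a b m = Transposition.transpose a b \<circ> m \<circ> Transposition.transpose a b"

lemma conj_transpose_involutory [simp]: "conj_transpose a b (conj_transpose a b m) = m"
  by (simp add: conj_transpose_def fun_eq_iff)

lemma conj_transpose_in_matchings: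
  assumes m: "m \<in> matchings H" and a: "a \<in> H" and b: "b \<in> H"
  shows "conj_transpose a b m \<in> matchings H"
proof -
  let ?t = "Transposition.transpose a b"
  have t_in: "?t h \<in> H" if "h \<in> H" for h using that a b by (auto simp: Transposition.transpose_def)
  have t_out: "?t h = h" if "h \<notin> H" for h using that a b by (auto simp: Transposition.transpose_def)
  have "conj_transpose a b m h \<in> H \<and> conj_transpose a b m h \<noteq> h
      \<and> conj_transpose a b m (conj_transpose a b m h) = h" if h: "h \<in> H" for h
    using matchingsD(1-3)[OF m t_in[OF h]] t_in[OF matchingsD(1)[OF m t_in[OF h]]]
    by (auto simp: conj_transpose_def) (metis transpose_involutory)
  moreover have "conj_transpose a b m h = h" if "h \<notin> H" for h
    using that t_out matchingsD(4)[OF m] by (simp add: conj_transpose_def)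
  ultimately show ?thesis by (auto simp: matchings_def)
qed

lemma finite_matchings:
  assumes "finite H"
  shows "finite (matchings H)"
proof -
  have "inj_on (\<lambda>m. restrict m H) (matchings H)"
    by (rule inj_onI) (metis matchingsD(4) restrict_apply' ext)
  moreover have "(\<lambda>m. restrict m H) ` matchings H \<subseteq> PiE H (\<lambda>_. H)"
    by (auto simp: matchings_def)
  moreover have "finite (PiE H (\<lambda>_. H))"
    using assms by (intro finite_PiE) auto
  ultimately show ?thesis
    by (meson finite_imageD finite_subset)
qed

lemma matchings_nonempty:
  assumes "finite H" "even (card H)"
  shows "matchings H \<noteq> {}"
  using assms
proof (induction "card H" arbitrary: H rule: less_induct)
  case less
  show ?case
  proof (cases "H = {}")
    case True
    hence "id \<in> matchings H" by (auto simp: matchings_def)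
    thus ?thesis by blast
  next
    case False
    then obtain a where a: "a \<in> H" by blast
    have "card H \<noteq> 1" "card H > 0"
      using less.prems False by (auto simp: card_gt_0_iff)
    hence "card (H - {a}) > 0" using a less.prems by simp
    then obtain b where b: "b \<in> H - {a}" by (metis card_gt_0_iff ex_in_conv)
    have "card {a, b} = 2" using b by auto
    hence card_rest: "card (H - {a, b}) = card H - 2"
      using a b less.prems by (simp add: card_Diff_subset)
    then obtain m where m: "m \<in> matchings (H - {a, b})"
      using less \<open>card H > 0\<close> \<open>card H \<noteq> 1\<close> by (fastforce simp: even_diff_nat)
    have "m(a := b, b := a) \<in> matchings H"
      using matchingsD[OF m] a b by (auto simp: matchings_def)
    thus ?thesis by blast
  qed
qed

text \<open>Conjugating by transpositions of unconstrained half-edges shows that every admissible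
  partner of \<open>x\<close> is equally likely; hence fixing \<open>m x = y\<close> costs a factor \<open>card (H - T)\<close>.\<close>
lemma card_matchings_pair_le:
  assumes H: "finite H" and A: "A \<subseteq> matchings H" and T: "T \<subseteq> H" and x: "x \<in> T" and y: "y \<in> H - T"
    and closed: "\<And>m a b. m \<in> A \<Longrightarrow> a \<in> H - T \<Longrightarrow> b \<in> H - T \<Longrightarrow> conj_transpose a b m \<in> A"
  shows "card {m\<in>A. m x = y} * card (H - T) \<le> card A"
proof -
  have finA: "finite A" using finite_subset[OF A finite_matchings[OF H]] .
  have same_card: "card {m\<in>A. m x = e} = card {m\<in>A. m x = y}" if e: "e \<in> H - T" for e
  proof -
    have "Transposition.transpose y e x = x" using x y e by (auto simp: Transposition.transpose_def)
    hence "bij_betw (conj_transpose y e) {m\<in>A. m x = y} {m\<in>A. m x = e}"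
      using closed[OF _ y e]
      by (intro bij_betw_byWitness[where f' = "conj_transpose y e"]) (auto simp: conj_transpose_def)
    thus ?thesis by (simp add: bij_betw_same_card)
  qed
  have "card A \<ge> card (\<Union>e\<in>H - T. {m\<in>A. m x = e})"
    by (intro card_mono finA) auto
  also have "card (\<Union>e\<in>H - T. {m\<in>A. m x = e}) = (\<Sum>e\<in>H - T. card {m\<in>A. m x = e})"
    by (rule card_UN_disjoint) (use H finA in auto)
  also have "\<dots> = (\<Sum>e\<in>H - T. card {m\<in>A. m x = y})"
    by (rule sum.cong) (use same_card in auto)
  finally show ?thesis by (simp add: mult.commute)
qed

definition matchings_fixing :: "'h set \<Rightarrow> ('h \<times> 'h) set \<Rightarrow> ('h \<Rightarrow> 'h) set" where
  "matchings_fixing H S = {m \<in> matchings H. \<forall>(x, y)\<in>S. m x = y}"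

definition disjoint_pairs :: "'h set \<Rightarrow> ('h \<times> 'h) set \<Rightarrow> bool" where
  "disjoint_pairs H S \<longleftrightarrow> (\<forall>(x, y)\<in>S. x \<noteq> y \<and> x \<in> H \<and> y \<in> H \<and>
      (\<forall>(x', y')\<in>S. (x, y) \<noteq> (x', y') \<longrightarrow> x \<noteq> x' \<and> x \<noteq> y' \<and> y \<noteq> x' \<and> y \<noteq> y'))"

lemma disjoint_pairs_subset: "disjoint_pairs H S' \<Longrightarrow> S \<subseteq> S' \<Longrightarrow> disjoint_pairs H S"
  unfolding disjoint_pairs_def by blast

lemma card_Field_le:
  assumes "finite S" shows "card (Field S) \<le> 2 * card S"
proof -
  have "card (Field S) \<le> card (fst ` S) + card (snd ` S)"
    unfolding Field_def Domain_fst Range_snd by (rule card_Un_le)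
  also have "\<dots> \<le> card S + card S" by (intro add_mono card_image_le assms)
  finally show ?thesis by simp
qed

lemma conj_transpose_in_matchings_fixing:
  assumes m: "m \<in> matchings_fixing H S" and a: "a \<in> H - Field S" and b: "b \<in> H - Field S"
  shows "conj_transpose a b m \<in> matchings_fixing H S"
proof -
  have "conj_transpose a b m x = y" if "(x, y) \<in> S" for x y
  proof -
    have "x \<in> Field S" "y \<in> Field S" using that by (auto simp: Field_def)
    hence "x \<noteq> a" "x \<noteq> b" "y \<noteq> a" "y \<noteq> b" using a b by auto
    moreover have "m x = y" using m that by (auto simp: matchings_fixing_def)
    ultimately show ?thesis by (simp add: conj_transpose_def Transposition.transpose_def)
  qed
  thus ?thesis using m a b conj_transpose_in_matchings by (auto simp: matchings_fixing_def)
qed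

text \<open>Each prescribed pair costs a factor \<open>card H + 1 - 2 k\<close> at least: when it is added, at most
  \<open>2 k - 1\<close> half-edges are already constrained.\<close>
lemma card_matchings_fixing_le:
  assumes H: "finite H" and S: "finite S" "disjoint_pairs H S" "card S \<le> k" and k: "2 * k \<le> card H + 1"
  shows "real (card (matchings_fixing H S)) * (real (card H) + 1 - 2 * real k) ^ card S
    \<le> real (card (matchings H))"
  using S
proof (induction S rule: finite_induct)
  case empty
  thus ?case by (simp add: matchings_fixing_def)
next
  case (insert xy S)
  obtain x y where xy: "xy = (x, y)" by (cases xy)
  let ?q = "real (card H) + 1 - 2 * real k"
  have disj: "disjoint_pairs H (insert (x, y) S)" using insert.prems xy by simp
  have IH: "real (card (matchings_fixing H S)) * ?q ^ card S \<le> real (card (matchings H))"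
  proof (rule insert.IH)
    show "disjoint_pairs H S" using insert.prems(1) by (rule disjoint_pairs_subset) blast
    show "card S \<le> k" using insert.hyps insert.prems(2) by simp
  qed
  have xyH: "x \<in> H" "y \<in> H" "x \<noteq> y" using disj unfolding disjoint_pairs_def by auto
  have fresh: "x \<noteq> x' \<and> x \<noteq> y' \<and> y \<noteq> x' \<and> y \<noteq> y'" if "(x', y') \<in> S" for x' y'
  proof -
    have "(x, y) \<noteq> (x', y')" using that insert.hyps(2) xy by auto
    with disj that show ?thesis unfolding disjoint_pairs_def by fastforce
  qed
  hence x_fresh: "x \<notin> Field S" and y_fresh: "y \<notin> Field S" unfolding Field_def by blast+
  have FH: "Field S \<subseteq> H" using disj unfolding disjoint_pairs_def Field_def by blast
  define T where "T = insert x (Field S)"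
  have TH: "T \<subseteq> H" using FH xyH by (auto simp: T_def)
  have "card T \<le> 2 * card S + 1"
    using card_Field_le[OF insert.hyps(1)] x_fresh insert.hyps(1) by (simp add: T_def finite_Field)
  hence card_free: "real (card (H - T)) \<ge> ?q"
    using card_Diff_subset[OF finite_subset[OF TH H] TH] insert.hyps insert.prems card_mono[OF H TH] by simp
  have closed: "conj_transpose a b m \<in> matchings_fixing H S"
    if "m \<in> matchings_fixing H S" "a \<in> H - T" "b \<in> H - T" for m a b
    using that by (intro conj_transpose_in_matchings_fixing) (auto simp: T_def)
  have step: "card {m\<in>matchings_fixing H S. m x = y} * card (H - T) \<le> card (matchings_fixing H S)"
    by (rule card_matchings_pair_le[OF H _ TH]) (use xyH y_fresh closed in \<open>auto simp: T_def matchings_fixing_def\<close>)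
  have fix_insert: "{m\<in>matchings_fixing H S. m x = y} = matchings_fixing H (insert xy S)"
    by (auto simp: matchings_fixing_def xy)
  have q_nonneg: "?q \<ge> 0" using k by simp
  have "real (card (matchings_fixing H (insert xy S))) * ?q ^ card (insert xy S)
      = (real (card (matchings_fixing H (insert xy S))) * ?q) * ?q ^ card S"
    using insert.hyps by simp
  also have "\<dots> \<le> (real (card (matchings_fixing H (insert xy S))) * real (card (H - T))) * ?q ^ card S"
    by (intro mult_right_mono mult_left_mono card_free) (use q_nonneg in auto)
  also have "\<dots> \<le> real (card (matchings_fixing H S)) * ?q ^ card S"
    using step fix_insert q_nonneg
    by (intro mult_right_mono) (simp_all add: of_nat_mult[symmetric] del: of_nat_mult)
  also have "\<dots> \<le> real (card (matchings H))" by (rule IH)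
  finally show ?case .
qed

section \<open>The configuration model\<close>

lemma half_edges_Sigma: "half_edges n d = (SIGMA i:{..<n}. {..<deg_ext n d i})"
  by (auto simp: half_edges_def)

lemma finite_half_edges [simp]: "finite (half_edges n d)"
  by (simp add: half_edges_Sigma)

lemma card_half_edges: "card (half_edges n d) = (\<Sum>i<n. deg_ext n d i)"
  by (simp add: half_edges_Sigma card_SigmaI)

lemma even_card_half_edges: "even (card (half_edges n d))"
proof (cases n)
  case 0 thus ?thesis by (simp add: card_half_edges)
next
  case (Suc n')
  have "(\<Sum>i<n. deg_ext n d i) = (\<Sum>i<n. d i) + (\<Sum>i<n. (if i = 0 \<and> odd (\<Sum>j<n. d j) then 1 else 0))"
    by (simp add: deg_ext_def sum.distrib)
  also have "(\<Sum>i<n. (if i = 0 \<and> odd (\<Sum>j<n. d j) then 1 else 0::nat)) = (if odd (\<Sum>j<n. d j) then 1 else 0)"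
    using Suc by (simp add: sum.If_cases)
  finally show ?thesis by (simp add: card_half_edges)
qed

lemma matchings_half_edges_nonempty: "matchings (half_edges n d) \<noteq> {}"
  by (rule matchings_nonempty) (simp_all add: even_card_half_edges)

lemma finite_matchings_half_edges [simp]: "finite (matchings (half_edges n d))"
  by (simp add: finite_matchings)

lemma card_matchings_half_edges_pos: "real (card (matchings (half_edges n d))) > 0"
  using matchings_half_edges_nonempty by (simp add: card_gt_0_iff)

lemma sum_le_card_half_edges: "(\<Sum>i<n. d i) \<le> card (half_edges n d)"
  unfolding card_half_edges by (intro sum_mono) (simp add: deg_ext_def)

lemma deg_ext_le: "deg_ext n d i \<le> d i + 1"
  by (simp add: deg_ext_def)

lemma ecm_edge_cases: "ecm_edge n d m i j = 0 \<or> ecm_edge n d m i j = 1"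
  by (simp add: ecm_edge_def)

definition ecm_triangle :: "nat \<Rightarrow> (nat \<Rightarrow> nat) \<Rightarrow> (nat \<times> nat \<Rightarrow> nat \<times> nat) \<Rightarrow> nat \<Rightarrow> nat \<Rightarrow> nat \<Rightarrow> real" where
  "ecm_triangle n d m i j k = ecm_edge n d m i j * ecm_edge n d m j k * ecm_edge n d m i k"

lemma ecm_triangle_nonneg: "0 \<le> ecm_triangle n d m i j k"
  and ecm_triangle_le_1: "ecm_triangle n d m i j k \<le> 1"
  using ecm_edge_cases[of n d m i j] ecm_edge_cases[of n d m j k] ecm_edge_cases[of n d m i k]
  by (auto simp: ecm_triangle_def)

text \<open>For each edge \<open>(a, b)\<close> of \<open>E\<close>, the choice \<open>c (a, b)\<close> names the half-edges of \<open>a\<close> and \<open>b\<close>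
  that are paired with each other.\<close>
definition edge_half_edge_pairs ::
    "(nat \<times> nat) set \<Rightarrow> (nat \<times> nat \<Rightarrow> nat \<times> nat) \<Rightarrow> ((nat \<times> nat) \<times> (nat \<times> nat)) set" where
  "edge_half_edge_pairs E c = (\<lambda>(a, b). ((a, fst (c (a, b))), (b, snd (c (a, b))))) ` E"

lemma card_edge_half_edge_pairs: "card (edge_half_edge_pairs E c) = card E"
  unfolding edge_half_edge_pairs_def by (rule card_image) (auto simp: inj_on_def)

lemma finite_edge_half_edge_pairs: "finite E \<Longrightarrow> finite (edge_half_edge_pairs E c)"
  by (simp add: edge_half_edge_pairs_def)

abbreviation half_edge_choices :: "nat \<Rightarrow> (nat \<Rightarrow> nat) \<Rightarrow> (nat \<times> nat) set \<Rightarrow> (nat \<times> nat \<Rightarrow> nat \<times> nat) set" where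
  "half_edge_choices n d E \<equiv> PiE E (\<lambda>(a, b). {..<deg_ext n d a} \<times> {..<deg_ext n d b})"

lemma ecm_edges_fixing_pairs:
  assumes m: "m \<in> matchings (half_edges n d)" and E: "\<forall>(a, b)\<in>E. ecm_edge n d m a b = 1"
  shows "\<exists>c\<in>half_edge_choices n d E. m \<in> matchings_fixing (half_edges n d) (edge_half_edge_pairs E c)"
proof -
  have "\<forall>e\<in>E. \<exists>kl. kl \<in> (case e of (a, b) \<Rightarrow> {..<deg_ext n d a} \<times> {..<deg_ext n d b})
      \<and> m (fst e, fst kl) = (snd e, snd kl)"
  proof
    fix e assume e: "e \<in> E"
    obtain a b where ab: "e = (a, b)" by (cases e)
    have "ecm_edge n d m a b = 1" using E e ab by auto
    then obtain k l where "(a, k) \<in> half_edges n d" "(b, l) \<in> half_edges n d" "m (a, k) = (b, l)"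
      unfolding ecm_edge_def by (auto split: if_splits)
    thus "\<exists>kl. kl \<in> (case e of (a, b) \<Rightarrow> {..<deg_ext n d a} \<times> {..<deg_ext n d b})
      \<and> m (fst e, fst kl) = (snd e, snd kl)"
      by (intro exI[of _ "(k, l)"]) (auto simp: ab half_edges_def)
  qed
  then obtain f where f: "\<forall>e\<in>E. f e \<in> (case e of (a, b) \<Rightarrow> {..<deg_ext n d a} \<times> {..<deg_ext n d b})
      \<and> m (fst e, fst (f e)) = (snd e, snd (f e))"
    by metis
  have "restrict f E \<in> half_edge_choices n d E"
    using f by auto
  moreover have "m \<in> matchings_fixing (half_edges n d) (edge_half_edge_pairs E (restrict f E))"
    using f m by (auto simp: matchings_fixing_def edge_half_edge_pairs_def)
  ultimately show ?thesis by blast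
qed

lemma disjoint_pairs_edge_half_edge_pairs:
  assumes E: "E \<subseteq> {(a, b). a < b \<and> b < n}" and c: "c \<in> half_edge_choices n d E"
    and m: "m \<in> matchings_fixing (half_edges n d) (edge_half_edge_pairs E c)"
  shows "disjoint_pairs (half_edges n d) (edge_half_edge_pairs E c)"
proof -
  let ?H = "half_edges n d"
  have mM: "m \<in> matchings ?H" using m by (simp add: matchings_fixing_def)
  have mem: "\<exists>a b k l. a < b \<and> (x, y) = ((a, k), (b, l)) \<and> x \<in> ?H \<and> y \<in> ?H \<and> m x = y"
    if "(x, y) \<in> edge_half_edge_pairs E c" for x y
  proof -
    from that obtain a b where ab: "(a, b) \<in> E" "(x, y) = ((a, fst (c (a, b))), (b, snd (c (a, b))))"
      unfolding edge_half_edge_pairs_def by auto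
    have "c (a, b) \<in> {..<deg_ext n d a} \<times> {..<deg_ext n d b}" using PiE_mem[OF c ab(1)] by simp
    moreover have "m x = y" using m that by (auto simp: matchings_fixing_def)
    ultimately show ?thesis using ab E by (auto simp: half_edges_def)
  qed
  have inv: "m (m h) = h" if "h \<in> ?H" for h using matchingsD(3)[OF mM that] .
  have "x \<noteq> x' \<and> x \<noteq> y' \<and> y \<noteq> x' \<and> y \<noteq> y'"
    if xy: "(x, y) \<in> edge_half_edge_pairs E c" and xy': "(x', y') \<in> edge_half_edge_pairs E c"
      and ne: "(x, y) \<noteq> (x', y')" for x y x' y'
  proof -
    obtain a b k l where 1: "a < b" "(x, y) = ((a, k), (b, l))" "x \<in> ?H" "y \<in> ?H" "m x = y"
      using mem[OF xy] by blast
    obtain a' b' k' l' where 2: "a' < b'" "(x', y') = ((a', k'), (b', l'))" "x' \<in> ?H" "m x' = y'"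
      using mem[OF xy'] by blast
    show ?thesis
    proof (intro conjI notI)
      assume "x = x'" thus False using 1 2 ne by auto
    next
      assume "x = y'" hence "y = x'" using inv 1 2 by metis
      thus False using \<open>x = y'\<close> 1 2 by auto
    next
      assume "y = x'" hence "y' = x" using inv 1 2 by metis
      thus False using \<open>y = x'\<close> 1 2 by auto
    next
      assume "y = y'" hence "x = x'" using inv 1 2 by metis
      thus False using \<open>y = y'\<close> ne by auto
    qed
  qed
  moreover have "x \<noteq> y" if "(x, y) \<in> edge_half_edge_pairs E c" for x y
    using mem[OF that] by auto
  ultimately show ?thesis using mem unfolding disjoint_pairs_def by blast
qed

text \<open>Union bound over the choice of half-edges realising each edge of \<open>E\<close>.\<close>
lemma card_matchings_with_edges_le:
  assumes E: "finite E" "E \<subseteq> {(a, b). a < b \<and> b < n}" "card E \<le> k"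
    and k: "2 * k \<le> card (half_edges n d)"
  shows "real (card {m \<in> matchings (half_edges n d). \<forall>(a, b)\<in>E. ecm_edge n d m a b = 1})
    \<le> real (card (matchings (half_edges n d))) * (\<Prod>(a, b)\<in>E.
         real (deg_ext n d a) * real (deg_ext n d b) / (real (card (half_edges n d)) + 1 - 2 * real k))"
proof -
  let ?H = "half_edges n d" and ?M = "matchings (half_edges n d)" and ?P = "half_edge_choices n d E"
  let ?q = "real (card ?H) + 1 - 2 * real k"
  have q_pos: "?q > 0" using k by simp
  have finP: "finite ?P" using E by (intro finite_PiE) auto
  have "{m \<in> ?M. \<forall>(a, b)\<in>E. ecm_edge n d m a b = 1} \<subseteq> (\<Union>c\<in>?P. matchings_fixing ?H (edge_half_edge_pairs E c))"
    using ecm_edges_fixing_pairs by blast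
  hence "card {m \<in> ?M. \<forall>(a, b)\<in>E. ecm_edge n d m a b = 1}
      \<le> card (\<Union>c\<in>?P. matchings_fixing ?H (edge_half_edge_pairs E c))"
    by (intro card_mono) (auto intro!: finite_UN_I finP simp: matchings_fixing_def)
  also have "\<dots> \<le> (\<Sum>c\<in>?P. card (matchings_fixing ?H (edge_half_edge_pairs E c)))"
    by (rule card_UN_le[OF finP])
  finally have union_bound: "real (card {m \<in> ?M. \<forall>(a, b)\<in>E. ecm_edge n d m a b = 1})
      \<le> (\<Sum>c\<in>?P. real (card (matchings_fixing ?H (edge_half_edge_pairs E c))))"
    by (simp flip: of_nat_sum)
  have each: "real (card (matchings_fixing ?H (edge_half_edge_pairs E c))) \<le> real (card ?M) / ?q ^ card E"
    if c: "c \<in> ?P" for c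
  proof (cases "matchings_fixing ?H (edge_half_edge_pairs E c) = {}")
    case True thus ?thesis using q_pos by simp
  next
    case False
    then obtain m where "m \<in> matchings_fixing ?H (edge_half_edge_pairs E c)" by blast
    hence "disjoint_pairs ?H (edge_half_edge_pairs E c)"
      using disjoint_pairs_edge_half_edge_pairs[OF E(2) c] by blast
    hence "real (card (matchings_fixing ?H (edge_half_edge_pairs E c))) * ?q ^ card E \<le> real (card ?M)"
      using card_matchings_fixing_le[of ?H "edge_half_edge_pairs E c" k] E k
      by (simp add: finite_edge_half_edge_pairs card_edge_half_edge_pairs)
    thus ?thesis using q_pos by (simp add: field_simps)
  qed
  have "(\<Sum>c\<in>?P. real (card (matchings_fixing ?H (edge_half_edge_pairs E c))))
      \<le> real (card ?P) * real (card ?M) / ?q ^ card E"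
    using sum_mono[OF each] by simp
  also have "real (card ?P) = (\<Prod>(a, b)\<in>E. real (deg_ext n d a) * real (deg_ext n d b))"
    using E by (simp add: card_PiE case_prod_unfold)
  also have "(\<Prod>(a, b)\<in>E. real (deg_ext n d a) * real (deg_ext n d b)) * real (card ?M) / ?q ^ card E
      = real (card ?M) * (\<Prod>(a, b)\<in>E. real (deg_ext n d a) * real (deg_ext n d b) / ?q)"
    by (simp add: prod_dividef case_prod_unfold)
  finally show ?thesis using union_bound by linarith
qed

definition matching_average :: "nat \<Rightarrow> (nat \<Rightarrow> nat) \<Rightarrow> ((nat \<times> nat \<Rightarrow> nat \<times> nat) \<Rightarrow> real) \<Rightarrow> real" where
  "matching_average n d F = (\<Sum>m\<in>matchings (half_edges n d). F m) / real (card (matchings (half_edges n d)))"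

lemma matching_average_mono:
  "(\<And>m. F m \<le> F' m) \<Longrightarrow> matching_average n d F \<le> matching_average n d F'"
  unfolding matching_average_def
  by (intro divide_right_mono sum_mono) (auto simp: card_matchings_half_edges_pos less_imp_le)

lemma matching_average_const [simp]: "matching_average n d (\<lambda>_. c) = c"
  using matchings_half_edges_nonempty[of n d] by (simp add: matching_average_def)

text \<open>Only the edges whose bound is below \<open>1\<close> are fed into the union bound; the others
  are bounded trivially.\<close>
lemma matching_average_triangle_le:
  assumes ijk: "i < j" "j < k" "k < n" and H: "card (half_edges n d) \<ge> 6"
  defines "f \<equiv> \<lambda>(a, b). real (deg_ext n d a) * real (deg_ext n d b) / (real (card (half_edges n d)) - 5)"
  shows "matching_average n d (\<lambda>m. ecm_triangle n d m i j k)
    \<le> min 1 (f (i, j)) * min 1 (f (j, k)) * min 1 (f (i, k))"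
proof -
  let ?M = "matchings (half_edges n d)"
  define E3 where "E3 = {(i, j), (j, k), (i, k)}"
  define E where "E = {e\<in>E3. f e \<le> 1}"
  have finE: "finite E" by (simp add: E_def E3_def)
  have Esub: "E \<subseteq> {(a, b). a < b \<and> b < n}" using ijk by (auto simp: E_def E3_def)
  have "card E \<le> card E3" unfolding E_def by (rule card_mono) (auto simp: E3_def)
  also have "card E3 \<le> 3" by (simp add: E3_def card_insert_if)
  finally have cE: "card E \<le> 3" .
  have "ecm_triangle n d m i j k \<le> (if \<forall>(a, b)\<in>E. ecm_edge n d m a b = 1 then 1 else 0)" for m
    using ecm_edge_cases[of n d m i j] ecm_edge_cases[of n d m j k] ecm_edge_cases[of n d m i k]
    by (auto simp: ecm_triangle_def E_def E3_def)
  hence "matching_average n d (\<lambda>m. ecm_triangle n d m i j k)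
      \<le> matching_average n d (\<lambda>m. if \<forall>(a, b)\<in>E. ecm_edge n d m a b = 1 then 1 else 0)"
    by (rule matching_average_mono)
  also have "\<dots> = real (card {m \<in> ?M. \<forall>(a, b)\<in>E. ecm_edge n d m a b = 1}) / real (card ?M)"
    by (simp add: matching_average_def sum.If_cases Int_def conj_commute)
  also have "\<dots> \<le> prod f E"
    using card_matchings_with_edges_le[OF finE Esub cE, of d] H card_matchings_half_edges_pos[of n d]
    by (simp add: f_def field_simps case_prod_unfold)
  also have "prod f E = (\<Prod>e\<in>E3. min 1 (f e))"
    unfolding E_def by (subst prod.inter_filter) (auto simp: E3_def intro!: prod.cong)
  also have "\<dots> = min 1 (f (i, j)) * min 1 (f (j, k)) * min 1 (f (i, k))"
    using ijk by (simp add: E3_def)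
  finally show ?thesis .
qed

section \<open>Dyadic decompositions of moments\<close>

lemma ex_pow2_floor:
  fixes r :: real assumes "1 \<le> r"
  shows "\<exists>k::nat. 2 ^ k \<le> r \<and> r < 2 ^ (k + 1)"
proof -
  define k where "k = nat \<lfloor>log 2 r\<rfloor>"
  have "0 \<le> log 2 r" using assms by simp
  hence "\<lfloor>log 2 r\<rfloor> = int k" by (simp add: k_def)
  hence "2 powr real k \<le> r \<and> r < 2 powr (real k + 1)"
    using floor_log_eq_powr_iff[of r 2 "int k"] assms by simp
  moreover have "2 powr (real k + 1) = 2 ^ (k + 1)"
    by (simp add: powr_add powr_realpow)
  ultimately show ?thesis by (auto simp: powr_realpow)
qed

lemma ex_pow2_ceiling:
  fixes r :: real assumes "1 < r"
  shows "\<exists>k::nat. 2 ^ k < r \<and> r \<le> 2 ^ (k + 1)"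
proof -
  define k where "k = nat (\<lceil>log 2 r\<rceil> - 1)"
  have "0 < log 2 r" using assms by simp
  hence "\<lceil>log 2 r\<rceil> = int k + 1" by (simp add: k_def)
  hence "2 powr real k < r \<and> r \<le> 2 powr (real k + 1)"
    using ceiling_log_eq_powr_iff[of r 2 k] assms by (simp add: add.commute)
  moreover have "2 powr (real k + 1) = 2 ^ (k + 1)"
    by (simp add: powr_add powr_realpow)
  ultimately show ?thesis by (auto simp: powr_realpow)
qed

lemma powr_two_power: "((2::real) powr a) ^ k = (2 ^ k) powr a"
  by (simp add: powr_power powr_realpow[symmetric] powr_powr mult.commute)

lemma integrable_pmf_bounded:
  fixes f :: "'a \<Rightarrow> real"
  assumes "\<And>d. \<bar>f d\<bar> \<le> B"
  shows "integrable (measure_pmf q) f"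
  using assms
  by (intro measure_pmf.integrable_const_bound[where B = B]) auto

lemma expectation_indicator:
  "measure_pmf.expectation q (\<lambda>d. c * indicator A d) = c * measure_pmf.prob q A"
  by (simp add: integral_indicator)

lemma expectation_sum_indicators:
  "measure_pmf.expectation q (\<lambda>d. \<Sum>j<J. c j * indicator (A j) d) = (\<Sum>j<J. c j * measure_pmf.prob q (A j))"
proof -
  have "measure_pmf.expectation q (\<lambda>d. \<Sum>j<J. c j * indicator (A j) d) =
        (\<Sum>j<J. measure_pmf.expectation q (\<lambda>d. c j * indicator (A j) d))"
  proof (rule Bochner_Integration.integral_sum)
    fix j show "integrable q (\<lambda>d. c j * indicator (A j) d)"
      by (rule integrable_pmf_bounded[where B="\<bar>c j\<bar>"]) (simp add: indicator_def)
  qed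
  also have "\<dots> = (\<Sum>j<J. c j * measure_pmf.prob q (A j))" by (simp add: expectation_indicator)
  finally show ?thesis .
qed

lemma integrable_le_if_truncations_le:
  fixes f :: "nat \<Rightarrow> real" and q :: "nat pmf"
  assumes nn: "\<And>d. f d \<ge> 0" and B: "\<And>N. measure_pmf.expectation q (\<lambda>d. f d * indicator {..N} d) \<le> B"
  shows "integrable q f \<and> measure_pmf.expectation q f \<le> B"
proof -
  define g where "g = (\<lambda>N d. ennreal (f d * indicator {..N} d))"
  have inc: "incseq g"
    by (auto simp: incseq_def le_fun_def g_def indicator_def nn intro!: ennreal_leI)
  have sup: "(SUP N. g N d) = ennreal (f d)" for d
  proof (rule antisym)
    show "(SUP N. g N d) \<le> ennreal (f d)"
      by (rule SUP_least) (auto simp: g_def indicator_def nn intro!: ennreal_leI)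
    have "g d d = ennreal (f d)" by (simp add: g_def)
    thus "ennreal (f d) \<le> (SUP N. g N d)" by (metis SUP_upper UNIV_I)
  qed
  have intN: "integrable q (\<lambda>d. f d * indicator {..N} d)" for N
    by (rule integrable_pmf_bounded[where B="\<Sum>k\<le>N. f k"]) (auto simp: indicator_def nn intro!: member_le_sum sum_nonneg)
  have gN: "integral\<^sup>N q (g N) \<le> ennreal B" for N
  proof -
    have "integral\<^sup>N q (g N) = ennreal (measure_pmf.expectation q (\<lambda>d. f d * indicator {..N} d))"
      unfolding g_def by (rule nn_integral_eq_integral[OF intN]) (auto simp: nn)
    also have "\<dots> \<le> ennreal B" by (rule ennreal_leI[OF B])
    finally show ?thesis .
  qed
  have "(\<integral>\<^sup>+ d. ennreal (f d) \<partial>q) = (\<integral>\<^sup>+ d. (SUP N. g N d) \<partial>q)" by (simp add: sup)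
  also have "\<dots> = (SUP N. integral\<^sup>N q (g N))"
    by (rule nn_integral_monotone_convergence_SUP[OF inc]) simp
  also have "\<dots> \<le> ennreal B" by (rule SUP_least) (rule gN)
  finally have le: "(\<integral>\<^sup>+ d. ennreal (f d) \<partial>q) \<le> ennreal B" .
  have int: "integrable q f"
    by (rule integrableI_bounded) (use le nn in \<open>auto simp: top.not_eq_extremum intro: le_less_trans\<close>)
  have "ennreal (measure_pmf.expectation q f) = (\<integral>\<^sup>+ d. ennreal (f d) \<partial>q)"
    by (rule nn_integral_eq_integral[symmetric, OF int]) (simp add: nn)
  with le have "ennreal (measure_pmf.expectation q f) \<le> ennreal B" by simp
  moreover have "B \<ge> 0" using B[of 0] Bochner_Integration.integral_nonneg[of q "\<lambda>d. f d * indicator {..0} d"] nn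
    by (smt (verit) indicator_pos_le mult_nonneg_nonneg)
  ultimately have "measure_pmf.expectation q f \<le> B" by (simp add: ennreal_le_iff)
  with int show ?thesis by blast
qed

lemma abs_sum_indicators_le:
  fixes c :: "nat \<Rightarrow> real"
  assumes "\<And>j. c j \<ge> 0"
  shows "\<bar>\<Sum>j<J. c j * indicator (A j) d\<bar> \<le> (\<Sum>j<J. c j)"
proof -
  have "0 \<le> (\<Sum>j<J. c j * indicator (A j) d)" using assms by (intro sum_nonneg) simp
  moreover have "(\<Sum>j<J. c j * indicator (A j) d) \<le> (\<Sum>j<J. c j)"
    using assms by (intro sum_mono) (simp add: indicator_def)
  ultimately show ?thesis by simp
qed

lemma geometric_sum_le:
  fixes r :: real
  assumes "0 \<le> r" "r < 1"
  shows "(\<Sum>j<J. r ^ j) \<le> 1 / (1 - r)"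
proof -
  have "(\<Sum>j<J. r ^ j) = (1 - r ^ J) / (1 - r)" using assms by (simp add: sum_gp_strict)
  also have "\<dots> \<le> 1 / (1 - r)" using assms by (intro divide_right_mono) auto
  finally show ?thesis .
qed

lemma truncated_power_le_dyadic_sum:
  assumes y: "0 < y" and q: "0 \<le> q" and J: "real N < y * 2 ^ J"
  shows "(real d powr q * indicator {k. real k > y} d) * indicator {..N} d
    \<le> (\<Sum>j<J. (y * 2 ^ (j + 1)) powr q * indicator {k::nat. real k > y * 2 ^ j} d)"
proof (cases "real d > y \<and> d \<le> N")
  case True
  hence "real d / y > 1" using y by (simp add: field_simps)
  then obtain j :: nat where j: "2 ^ j < real d / y" "real d / y \<le> 2 ^ (j + 1)"
    using ex_pow2_ceiling by blast
  have jd: "y * 2 ^ j < real d" "real d \<le> y * 2 ^ (j + 1)" using j y by (auto simp: field_simps)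
  have "y * 2 ^ j < y * 2 ^ J" using jd True J by linarith
  hence jJ: "j < J" using y by simp
  have "real d powr q \<le> (y * 2 ^ (j + 1)) powr q" by (rule powr_mono2) (use jd q in auto)
  also have "\<dots> = (y * 2 ^ (j + 1)) powr q * indicator {k::nat. real k > y * 2 ^ j} d" using jd by simp
  also have "\<dots> \<le> (\<Sum>j<J. (y * 2 ^ (j + 1)) powr q * indicator {k::nat. real k > y * 2 ^ j} d)"
    by (rule member_le_sum) (use jJ in auto)
  finally show ?thesis using True by simp
next
  case False
  thus ?thesis by (auto simp: indicator_def intro!: sum_nonneg)
qed

lemma truncated_power_le_lower_dyadic_sum:
  assumes q: "0 < q" and a: "0 < a" and J: "2 ^ J \<le> y / a" "y / a < 2 ^ (J + 1)"
  shows "real d powr q * indicator {k. real k \<le> y} d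
    \<le> (2 * a) powr q + (\<Sum>j<J. (y / 2 ^ j) powr q * indicator {k::nat. real k > y / 2 ^ (j + 1)} d)"
proof -
  have ypos: "y > 0" using J a by (smt (verit) divide_nonpos_pos zero_less_power)
  have sum_nonneg: "0 \<le> (\<Sum>j<J. (y / 2 ^ j) powr q * indicator {k::nat. real k > y / 2 ^ (j + 1)} d)"
    by (intro sum_nonneg) simp
  consider "real d > y" | "real d \<le> 2 * a" | "2 * a < real d" "real d \<le> y" by linarith
  thus ?thesis
  proof cases
    case 1 thus ?thesis using sum_nonneg by simp
  next
    case 2
    hence "real d powr q \<le> (2 * a) powr q" by (intro powr_mono2) (use q in auto)
    thus ?thesis using sum_nonneg by (simp add: indicator_def)
  next
    case 3
    hence dpos: "real d > 0" using a by simp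
    obtain j :: nat where j: "2 ^ j \<le> y / real d" "y / real d < 2 ^ (j + 1)"
      using ex_pow2_floor[of "y / real d"] 3 dpos by auto
    have jd: "y / 2 ^ (j + 1) < real d" "real d \<le> y / 2 ^ j" using j dpos by (auto simp: field_simps)
    have "y / real d < y / (2 * a)" using 3 ypos a by (intro divide_strict_left_mono) auto
    also have "\<dots> < 2 ^ (J + 1) / 2" using J(2) by (simp add: field_simps)
    finally have "y / real d < 2 ^ J" by simp
    hence "(2::real) ^ j < 2 ^ J" using j(1) by linarith
    hence jJ: "j < J" by (simp add: power_strict_increasing_iff)
    have "real d powr q \<le> (y / 2 ^ j) powr q" by (rule powr_mono2) (use q jd in auto)
    also have "\<dots> = (y / 2 ^ j) powr q * indicator {k::nat. real k > y / 2 ^ (j + 1)} d" using jd by simp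
    also have "\<dots> \<le> (\<Sum>j<J. (y / 2 ^ j) powr q * indicator {k::nat. real k > y / 2 ^ (j + 1)} d)"
      by (rule member_le_sum) (use jJ in auto)
    finally show ?thesis using 3 by (simp add: add_increasing)
  qed
qed

lemma plus1_powr_le_four_powr:
  fixes d q :: real
  assumes d: "1 \<le> d" and q: "0 \<le> q" "q \<le> 2"
  shows "(d + 1) powr q \<le> 4 * d powr q"
proof -
  have "(d + 1) powr q \<le> (2 * d) powr q" by (rule powr_mono2) (use d q in auto)
  also have "\<dots> = 2 powr q * d powr q" using d by (simp add: powr_mult)
  also have "2 powr q \<le> 2 powr 2" by (rule powr_mono) (use q in auto)
  hence "2 powr q * d powr q \<le> 4 * d powr q" by (intro mult_right_mono) auto
  finally show ?thesis .
qed

lemma plus1_powr_le: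
  fixes d q :: real
  assumes d: "0 \<le> d" and q: "0 \<le> q" "q \<le> 2"
  shows "(d + 1) powr q \<le> 4 * d powr q + 4"
proof (cases "d \<ge> 1")
  case True
  thus ?thesis using plus1_powr_le_four_powr[OF True q] by simp
next
  case False
  have "(d + 1) powr q \<le> 2 powr q" by (rule powr_mono2) (use False q d in auto)
  also have "\<dots> \<le> 2 powr 2" by (rule powr_mono) (use q in auto)
  finally have "(d + 1) powr q \<le> 4" by simp
  thus ?thesis using powr_ge_zero[of d q] by linarith
qed

section \<open>Regularly varying tails\<close>

lemma slowly_varying_double_ratio:
  assumes "slowly_varying L" and "0 < e"
  shows "\<forall>\<^sub>F t in at_top. 2 powr (- e) < L (2 * t) / L t \<and> L (2 * t) / L t < 2 powr e"
proof -
  have lim: "((\<lambda>t. L (2 * t) / L t) \<longlongrightarrow> 1) at_top"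
    using assms(1) by (simp add: slowly_varying_def)
  have "2 powr (- e) < 1" "1 < 2 powr e" using assms(2) by (simp_all add: powr_less_one)
  thus ?thesis by (intro eventually_conj order_tendstoD[OF lim])
qed

locale regularly_varying_degrees =
  fixes p :: "nat pmf" and L :: "real \<Rightarrow> real" and \<gamma> \<mu> :: real
  assumes tail: "\<forall>t>0. measure_pmf.prob p {k. real k > t} = L t * t powr (- \<gamma>)"
    and sv: "slowly_varying L"
    and gamma_gt_1: "1 < \<gamma>" and gamma_lt_2: "\<gamma> < 2"
    and mu: "\<mu> = measure_pmf.expectation p real"
begin

definition survival :: "real \<Rightarrow> real" where
  "survival t = measure_pmf.prob p {k. real k > t}"

definition \<delta> :: real where
  "\<delta> = min ((2 - \<gamma>) / 8) ((\<gamma> - 1) / 4)"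

lemma delta_pos: "\<delta> > 0"
  using gamma_gt_1 gamma_lt_2 by (simp add: \<delta>_def)
lemma delta_le_two_minus_gamma: "\<delta> \<le> (2 - \<gamma>) / 8"
  unfolding \<delta>_def by (rule min.cobounded1)
lemma delta_le_gamma_minus_one: "\<delta> \<le> (\<gamma> - 1) / 4"
  unfolding \<delta>_def by (rule min.cobounded2)

lemma two_powr_gamma_delta_le_8: "2 powr (\<gamma> + \<delta>) \<le> 8"
proof -
  have "2 powr (\<gamma> + \<delta>) \<le> 2 powr 3" by (rule powr_mono) (use gamma_lt_2 delta_le_two_minus_gamma gamma_gt_1 in auto)
  thus ?thesis by simp
qed

lemma survival_nonneg: "survival t \<ge> 0"
  by (simp add: survival_def)

lemma survival_antimono: "t \<le> t' \<Longrightarrow> survival t' \<le> survival t"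
  unfolding survival_def by (rule measure_pmf.finite_measure_mono) auto

lemma L_eq_survival: "t > 0 \<Longrightarrow> L t = survival t * t powr \<gamma>"
  using tail by (simp add: survival_def powr_minus field_simps)

definition doubling_from :: "real \<Rightarrow> bool" where
  "doubling_from x \<longleftrightarrow> x \<ge> 1 \<and> (\<forall>t\<ge>x. survival t > 0 \<and> survival (2 * t) \<le> 2 powr (\<delta> - \<gamma>) * survival t \<and> survival t \<le> 2 powr (\<gamma> + \<delta>) * survival (2 * t))"

lemma ex_doubling_from: "\<exists>x. doubling_from x"
proof -
  obtain x where x: "\<And>t. t \<ge> x \<Longrightarrow> 2 powr (- \<delta>) < L (2 * t) / L t \<and> L (2 * t) / L t < 2 powr \<delta>"
    using slowly_varying_double_ratio[OF sv delta_pos] unfolding eventually_at_top_linorder by blast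
  define x' where "x' = max x 1"
  have "doubling_from x'"
    unfolding doubling_from_def
  proof (intro conjI allI impI)
    show "x' \<ge> 1" by (simp add: x'_def)
    fix t assume t: "t \<ge> x'"
    hence t1: "t \<ge> 1" "t \<ge> x" by (auto simp: x'_def)
    have r: "2 powr (- \<delta>) < L (2 * t) / L t" "L (2 * t) / L t < 2 powr \<delta>" using x[OF t1(2)] by auto
    have Lt: "L t = survival t * t powr \<gamma>" using t1 by (simp add: L_eq_survival)
    have L2t: "L (2 * t) = survival (2 * t) * (2 powr \<gamma> * t powr \<gamma>)" using t1 by (simp add: L_eq_survival powr_mult)
    have "L t \<noteq> 0" using r(1) by (auto simp: powr_def)
    hence Gt: "survival t > 0" using Lt survival_nonneg[of t] by (auto simp: less_le)
    show "survival t > 0" by (fact Gt)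
    have tg: "t powr \<gamma> > 0" using t1 by simp
    have Ltp: "L t > 0" using Lt Gt tg by simp
    have "L (2 * t) \<le> 2 powr \<delta> * L t" using r(2) Ltp by (simp add: field_simps)
    hence "survival (2 * t) * 2 powr \<gamma> * t powr \<gamma> \<le> 2 powr \<delta> * survival t * t powr \<gamma>"
      using Lt L2t by (simp add: mult_ac)
    hence "survival (2 * t) * 2 powr \<gamma> \<le> 2 powr \<delta> * survival t" using tg by simp
    hence "survival (2 * t) \<le> 2 powr \<delta> * survival t / 2 powr \<gamma>" by (simp add: field_simps)
    thus "survival (2 * t) \<le> 2 powr (\<delta> - \<gamma>) * survival t" by (simp add: powr_diff field_simps)
    have "2 powr (- \<delta>) * L t \<le> L (2 * t)" using r(1) Ltp by (simp add: field_simps)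
    hence "2 powr (- \<delta>) * survival t * t powr \<gamma> \<le> survival (2 * t) * 2 powr \<gamma> * t powr \<gamma>"
      using Lt L2t by (simp add: mult_ac)
    hence "2 powr (- \<delta>) * survival t \<le> survival (2 * t) * 2 powr \<gamma>" using tg by simp
    hence "survival t \<le> survival (2 * t) * 2 powr \<gamma> / 2 powr (- \<delta>)" by (simp add: field_simps)
    thus "survival t \<le> 2 powr (\<gamma> + \<delta>) * survival (2 * t)" by (simp add: powr_add powr_minus field_simps)
  qed
  thus ?thesis by blast
qed

definition t0 :: real where "t0 = (SOME x. doubling_from x)"

lemma doubling_from_t0: "doubling_from t0"
  unfolding t0_def using ex_doubling_from by (rule someI_ex)

lemma t0_ge_1: "t0 \<ge> 1" and survival_pos_t0: "t \<ge> t0 \<Longrightarrow> survival t > 0"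
  and survival_double_le: "t \<ge> t0 \<Longrightarrow> survival (2 * t) \<le> 2 powr (\<delta> - \<gamma>) * survival t"
  and survival_le_double: "t \<ge> t0 \<Longrightarrow> survival t \<le> 2 powr (\<gamma> + \<delta>) * survival (2 * t)"
  using doubling_from_t0 by (auto simp: doubling_from_def)

lemma survival_pos: "survival t > 0"
proof -
  have "survival (max t t0) > 0" by (rule survival_pos_t0) simp
  moreover have "survival (max t t0) \<le> survival t" by (rule survival_antimono) simp
  ultimately show ?thesis by linarith
qed

lemma survival_pow2_mult_le: "t \<ge> t0 \<Longrightarrow> survival (2 ^ k * t) \<le> (2 powr (\<delta> - \<gamma>)) ^ k * survival t"
proof (induction k)
  case 0 thus ?case by simp
next
  case (Suc k)
  have "2 ^ k * t \<ge> t0" using Suc.prems t0_ge_1 by (smt (verit) mult_le_cancel_right1 one_le_power)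
  hence "survival (2 * (2 ^ k * t)) \<le> 2 powr (\<delta> - \<gamma>) * survival (2 ^ k * t)" by (rule survival_double_le)
  also have "\<dots> \<le> 2 powr (\<delta> - \<gamma>) * ((2 powr (\<delta> - \<gamma>)) ^ k * survival t)"
    by (intro mult_left_mono Suc.IH Suc.prems) simp
  finally show ?case by (simp add: mult_ac)
qed

lemma survival_le_pow2_mult: "t \<ge> t0 \<Longrightarrow> survival t \<le> (2 powr (\<gamma> + \<delta>)) ^ k * survival (2 ^ k * t)"
proof (induction k)
  case 0 thus ?case by simp
next
  case (Suc k)
  have "2 ^ k * t \<ge> t0" using Suc.prems t0_ge_1 by (smt (verit) mult_le_cancel_right1 one_le_power)
  hence "survival (2 ^ k * t) \<le> 2 powr (\<gamma> + \<delta>) * survival (2 * (2 ^ k * t))" by (rule survival_le_double)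
  hence "(2 powr (\<gamma> + \<delta>)) ^ k * survival (2 ^ k * t) \<le> (2 powr (\<gamma> + \<delta>)) ^ k * (2 powr (\<gamma> + \<delta>) * survival (2 * (2 ^ k * t)))"
    by (intro mult_left_mono) simp_all
  with Suc.IH[OF Suc.prems] have "survival t \<le> (2 powr (\<gamma> + \<delta>)) ^ k * (2 powr (\<gamma> + \<delta>) * survival (2 * (2 ^ k * t)))"
    by linarith
  thus ?case by (simp add: mult_ac)
qed

lemma survival_mult_le:
  assumes t: "t \<ge> t0" and l: "l \<ge> 1"
  shows "survival (l * t) \<le> 2 powr \<gamma> * l powr (\<delta> - \<gamma>) * survival t"
proof -
  obtain k :: nat where k: "2 ^ k \<le> l" "l < 2 ^ (k + 1)" using ex_pow2_floor[OF l] by blast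
  have tpos: "t > 0" using t t0_ge_1 by simp
  have "survival (l * t) \<le> survival (2 ^ k * t)" by (rule survival_antimono) (use k tpos in simp)
  also have "\<dots> \<le> (2 powr (\<delta> - \<gamma>)) ^ k * survival t" by (rule survival_pow2_mult_le[OF t])
  also have "(2 powr (\<delta> - \<gamma>)) ^ k = (2 ^ k) powr (\<delta> - \<gamma>)" by (rule powr_two_power)
  also have "(2 ^ k) powr (\<delta> - \<gamma>) \<le> (l / 2) powr (\<delta> - \<gamma>)"
    by (rule powr_mono2') (use k delta_le_gamma_minus_one gamma_gt_1 in auto)
  also have "(l / 2) powr (\<delta> - \<gamma>) = l powr (\<delta> - \<gamma>) * 2 powr (\<gamma> - \<delta>)"
    using l by (simp add: powr_divide powr_diff field_simps)
  also have "\<dots> \<le> l powr (\<delta> - \<gamma>) * 2 powr \<gamma>"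
    by (intro mult_left_mono powr_mono) (use delta_pos in auto)
  finally show ?thesis using survival_nonneg[of t] by (simp add: mult_ac mult_right_mono)
qed

lemma survival_le_mult:
  assumes t: "t \<ge> t0" and l: "l \<ge> 1"
  shows "survival t \<le> (2 * l) powr (\<gamma> + \<delta>) * survival (l * t)"
proof -
  obtain k :: nat where k: "2 ^ k \<le> l" "l < 2 ^ (k + 1)" using ex_pow2_floor[OF l] by blast
  have tpos: "t > 0" using t t0_ge_1 by simp
  have "survival t \<le> (2 powr (\<gamma> + \<delta>)) ^ (k + 1) * survival (2 ^ (k + 1) * t)" by (rule survival_le_pow2_mult[OF t])
  also have "(2 powr (\<gamma> + \<delta>)) ^ (k + 1) = (2 ^ (k + 1)) powr (\<gamma> + \<delta>)" by (rule powr_two_power)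
  also have "survival (2 ^ (k + 1) * t) \<le> survival (l * t)" by (rule survival_antimono) (use k tpos in simp)
  also have "(2 ^ (k + 1)) powr (\<gamma> + \<delta>) \<le> (2 * l) powr (\<gamma> + \<delta>)"
    by (rule powr_mono2) (use k delta_pos gamma_gt_1 in auto)
  finally show ?thesis using survival_nonneg by (simp add: mult_right_mono)
qed

definition \<rho> :: real where "\<rho> = 2 powr (- \<delta>)"

lemma rho_bounds: "0 < \<rho>" "\<rho> < 1"
  using delta_pos by (auto simp: \<rho>_def powr_less_one)

text \<open>The weight \<open>y 2^(j+1)\<close> grows like \<open>2^q\<close> per doubling while the survival function
  decays like \<open>2^(\<delta> - \<gamma>)\<close>, so the dyadic shells form a geometric series.\<close>
lemma upper_dyadic_sum_le:
  assumes q: "0 \<le> q" "q \<le> \<gamma> - 2 * \<delta>" and y: "y \<ge> t0"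
  shows "(\<Sum>j<J. (y * 2 ^ (j + 1)) powr q * survival (y * 2 ^ j)) \<le> 4 / (1 - \<rho>) * (y powr q * survival y)"
proof -
  have ypos: "y > 0" using y t0_ge_1 by simp
  have "(\<Sum>j<J. (y * 2 ^ (j + 1)) powr q * survival (y * 2 ^ j))
      \<le> (\<Sum>j<J. (2 powr q * y powr q * survival y) * (2 powr (q + \<delta> - \<gamma>)) ^ j)"
  proof (rule sum_mono)
    fix j
    have "survival (y * 2 ^ j) \<le> (2 powr (\<delta> - \<gamma>)) ^ j * survival y"
      using survival_pow2_mult_le[OF y, of j] by (simp add: mult.commute)
    hence "(y * 2 ^ (j + 1)) powr q * survival (y * 2 ^ j)
        \<le> (y * 2 ^ (j + 1)) powr q * ((2 powr (\<delta> - \<gamma>)) ^ j * survival y)"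
      by (intro mult_left_mono) simp_all
    also have "\<dots> = (2 powr q * y powr q * survival y) * (2 powr q * 2 powr (\<delta> - \<gamma>)) ^ j"
      using ypos by (simp add: powr_mult powr_two_power[symmetric] power_mult_distrib mult_ac)
    also have "2 powr q * 2 powr (\<delta> - \<gamma>) = 2 powr (q + \<delta> - \<gamma>)"
      by (simp add: powr_add[symmetric] algebra_simps)
    finally show "(y * 2 ^ (j + 1)) powr q * survival (y * 2 ^ j)
        \<le> (2 powr q * y powr q * survival y) * (2 powr (q + \<delta> - \<gamma>)) ^ j" .
  qed
  also have "\<dots> = (2 powr q * y powr q * survival y) * (\<Sum>j<J. (2 powr (q + \<delta> - \<gamma>)) ^ j)"
    by (simp add: sum_distrib_left)
  also have "\<dots> \<le> (4 * y powr q * survival y) * (\<Sum>j<J. \<rho> ^ j)"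
  proof (rule mult_mono)
    have "2 powr q \<le> 2 powr 2" by (rule powr_mono) (use q gamma_lt_2 delta_pos in auto)
    thus "2 powr q * y powr q * survival y \<le> 4 * y powr q * survival y"
      by (simp add: mult_right_mono survival_nonneg mult.assoc)
    have "2 powr (q + \<delta> - \<gamma>) \<le> \<rho>" unfolding \<rho>_def by (rule powr_mono) (use q in auto)
    thus "(\<Sum>j<J. (2 powr (q + \<delta> - \<gamma>)) ^ j) \<le> (\<Sum>j<J. \<rho> ^ j)"
      by (intro sum_mono power_mono) auto
  qed (simp_all add: survival_nonneg sum_nonneg)
  also have "\<dots> \<le> (4 * y powr q * survival y) * (1 / (1 - \<rho>))"
    by (intro mult_left_mono geometric_sum_le) (use rho_bounds survival_nonneg[of y] in auto)
  finally show ?thesis by simp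
qed

lemma upper_moment_truncation_le:
  assumes q: "0 \<le> q" "q \<le> \<gamma> - 2 * \<delta>" and y: "y \<ge> t0"
  shows "measure_pmf.expectation p (\<lambda>d. (real d powr q * indicator {k. real k > y} d) * indicator {..N} d)
           \<le> 4 / (1 - \<rho>) * (y powr q * survival y)"
proof -
  have ypos: "y > 0" using y t0_ge_1 by simp
  obtain J :: nat where J: "real N < y * 2 ^ J"
    using real_arch_pow[of 2 "real N / y"] ypos by (auto simp: field_simps)
  define c where "c = (\<lambda>j::nat. (y * 2 ^ (j + 1)) powr q)"
  define A where "A = (\<lambda>j::nat. {k::nat. real k > y * 2 ^ j})"
  have "measure_pmf.expectation p (\<lambda>d. (real d powr q * indicator {k. real k > y} d) * indicator {..N} d)
      \<le> measure_pmf.expectation p (\<lambda>d. \<Sum>j<J. c j * indicator (A j) d)"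
  proof (rule integral_mono)
    show "integrable p (\<lambda>d. (real d powr q * indicator {k. real k > y} d) * indicator {..N} d)"
      by (rule integrable_pmf_bounded[where B = "real N powr q"]) (auto simp: indicator_def intro!: powr_mono2 q)
    show "integrable p (\<lambda>d. \<Sum>j<J. c j * indicator (A j) d)"
      by (rule integrable_pmf_bounded[where B = "\<Sum>j<J. c j"], rule abs_sum_indicators_le) (simp add: c_def)
    show "(real d powr q * indicator {k. real k > y} d) * indicator {..N} d \<le> (\<Sum>j<J. c j * indicator (A j) d)" for d
      unfolding c_def A_def by (rule truncated_power_le_dyadic_sum[OF ypos q(1) J])
  qed
  also have "\<dots> = (\<Sum>j<J. c j * survival (y * 2 ^ j))"
    unfolding expectation_sum_indicators by (simp add: A_def survival_def)
  also have "\<dots> \<le> 4 / (1 - \<rho>) * (y powr q * survival y)"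
    unfolding c_def by (rule upper_dyadic_sum_le[OF q y])
  finally show ?thesis .
qed

lemma upper_moment_le:
  assumes q: "0 \<le> q" "q \<le> \<gamma> - 2 * \<delta>" and y: "y \<ge> t0"
  shows "integrable p (\<lambda>d. real d powr q * indicator {k. real k > y} d) \<and>
         measure_pmf.expectation p (\<lambda>d. real d powr q * indicator {k. real k > y} d) \<le> 4 / (1 - \<rho>) * (y powr q * survival y)"
proof (rule integrable_le_if_truncations_le)
  fix d show "0 \<le> real d powr q * indicator {k. real k > y} d" by simp
next
  fix N show "measure_pmf.expectation p (\<lambda>d. (real d powr q * indicator {k. real k > y} d) * indicator {..N} d)
           \<le> 4 / (1 - \<rho>) * (y powr q * survival y)" by (rule upper_moment_truncation_le[OF q y])
qed

definition c_low :: real where "c_low = survival t0 * (t0 / 2) powr (\<gamma> + \<delta>)"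

lemma c_low_pos: "c_low > 0"
  using t0_ge_1 survival_pos by (simp add: c_low_def)

lemma survival_ge_power:
  assumes y: "y \<ge> t0"
  shows "survival y \<ge> c_low * y powr (- (\<gamma> + \<delta>))"
proof -
  have ypos: "y > 0" using y t0_ge_1 by simp
  have "survival t0 \<le> (2 * (y / t0)) powr (\<gamma> + \<delta>) * survival (y / t0 * t0)"
    by (rule survival_le_mult) (use y t0_ge_1 in auto)
  also have "y / t0 * t0 = y" using t0_ge_1 by simp
  also have "(2 * (y / t0)) powr (\<gamma> + \<delta>) = y powr (\<gamma> + \<delta>) / (t0 / 2) powr (\<gamma> + \<delta>)"
    using ypos t0_ge_1 by (simp add: powr_mult powr_divide field_simps)
  finally have "survival t0 \<le> y powr (\<gamma> + \<delta>) / (t0 / 2) powr (\<gamma> + \<delta>) * survival y" .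
  hence "survival t0 * (t0 / 2) powr (\<gamma> + \<delta>) \<le> y powr (\<gamma> + \<delta>) * survival y"
    using t0_ge_1 by (simp add: field_simps)
  hence "c_low \<le> y powr (\<gamma> + \<delta>) * survival y" by (simp add: c_low_def)
  hence "c_low * y powr (- (\<gamma> + \<delta>)) \<le> y powr (\<gamma> + \<delta>) * survival y * y powr (- (\<gamma> + \<delta>))"
    by (intro mult_right_mono) auto
  also have "\<dots> = survival y * (y powr (\<gamma> + \<delta>) * y powr (- (\<gamma> + \<delta>)))" by (simp add: mult_ac)
  also have "y powr (\<gamma> + \<delta>) * y powr (- (\<gamma> + \<delta>)) = 1" using ypos by (simp add: powr_add[symmetric])
  finally show ?thesis by simp
qed

lemma lower_dyadic_sum_le:
  assumes q: "\<gamma> + 2 * \<delta> \<le> q" and J: "t0 * 2 ^ J \<le> y"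
  shows "(\<Sum>j<J. (y / 2 ^ j) powr q * survival (y / 2 ^ (j + 1))) \<le> 8 / (1 - \<rho>) * (y powr q * survival y)"
proof -
  have ypos: "y > 0" using J t0_ge_1 by (smt (verit) one_le_power mult_le_cancel_left1)
  have "(\<Sum>j<J. (y / 2 ^ j) powr q * survival (y / 2 ^ (j + 1))) \<le> (\<Sum>j<J. (8 * y powr q * survival y) * \<rho> ^ j)"
  proof (rule sum_mono)
    fix j assume "j \<in> {..<J}"
    hence "t0 * 2 ^ (j + 1) \<le> t0 * 2 ^ J" using t0_ge_1 by (intro mult_left_mono power_increasing) auto
    hence "y / 2 ^ (j + 1) \<ge> t0" using J by (simp add: field_simps)
    from survival_le_pow2_mult[OF this, of "j + 1"]
    have "survival (y / 2 ^ (j + 1)) \<le> (2 powr (\<gamma> + \<delta>)) ^ (j + 1) * survival y" by simp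
    hence "(y / 2 ^ j) powr q * survival (y / 2 ^ (j + 1))
        \<le> (y / 2 ^ j) powr q * ((2 powr (\<gamma> + \<delta>)) ^ (j + 1) * survival y)"
      by (intro mult_left_mono) simp_all
    also have "\<dots> = (2 powr (\<gamma> + \<delta>) * y powr q * survival y) * (2 powr (\<gamma> + \<delta>) / 2 powr q) ^ j"
      using ypos by (simp add: powr_divide powr_two_power power_divide field_simps)
    also have "2 powr (\<gamma> + \<delta>) / 2 powr q = 2 powr (\<gamma> + \<delta> - q)" by (simp add: powr_diff)
    also have "(2 powr (\<gamma> + \<delta>) * y powr q * survival y) * (2 powr (\<gamma> + \<delta> - q)) ^ j
        \<le> (8 * y powr q * survival y) * \<rho> ^ j"
    proof (rule mult_mono)
      show "2 powr (\<gamma> + \<delta>) * y powr q * survival y \<le> 8 * y powr q * survival y"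
        using two_powr_gamma_delta_le_8 by (simp add: mult_right_mono survival_nonneg mult.assoc)
      have "2 powr (\<gamma> + \<delta> - q) \<le> \<rho>" unfolding \<rho>_def by (rule powr_mono) (use q in auto)
      thus "(2 powr (\<gamma> + \<delta> - q)) ^ j \<le> \<rho> ^ j" by (intro power_mono) auto
    qed (simp_all add: survival_nonneg)
    finally show "(y / 2 ^ j) powr q * survival (y / 2 ^ (j + 1)) \<le> (8 * y powr q * survival y) * \<rho> ^ j" .
  qed
  also have "\<dots> = (8 * y powr q * survival y) * (\<Sum>j<J. \<rho> ^ j)" by (simp add: sum_distrib_left)
  also have "\<dots> \<le> (8 * y powr q * survival y) * (1 / (1 - \<rho>))"
    by (intro mult_left_mono geometric_sum_le) (use rho_bounds survival_nonneg[of y] in auto)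
  finally show ?thesis by simp
qed

lemma lower_power_moment_le:
  assumes q: "\<gamma> + 2 * \<delta> \<le> q" "q \<le> 2" and y: "y \<ge> t0"
  shows "measure_pmf.expectation p (\<lambda>d. real d powr q * indicator {k. real k \<le> y} d)
     \<le> (2 * t0) powr q + 8 / (1 - \<rho>) * (y powr q * survival y)"
proof -
  have qpos: "q > 0" using q gamma_gt_1 delta_pos by simp
  have t0pos: "t0 > 0" using t0_ge_1 by simp
  obtain J :: nat where J: "2 ^ J \<le> y / t0" "y / t0 < 2 ^ (J + 1)"
    using ex_pow2_floor[of "y / t0"] y t0pos by auto
  define c where "c = (\<lambda>j::nat. (y / 2 ^ j) powr q)"
  define A where "A = (\<lambda>j::nat. {k::nat. real k > y / 2 ^ (j + 1)})"
  have int_sum: "integrable p (\<lambda>d. \<Sum>j<J. c j * indicator (A j) d)"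
    by (rule integrable_pmf_bounded[where B = "\<Sum>j<J. c j"], rule abs_sum_indicators_le) (simp add: c_def)
  have "measure_pmf.expectation p (\<lambda>d. real d powr q * indicator {k. real k \<le> y} d)
      \<le> measure_pmf.expectation p (\<lambda>d. (2 * t0) powr q + (\<Sum>j<J. c j * indicator (A j) d))"
  proof (rule integral_mono)
    show "integrable p (\<lambda>d. real d powr q * indicator {k. real k \<le> y} d)"
      by (rule integrable_pmf_bounded[where B = "y powr q"]) (auto simp: indicator_def intro!: powr_mono2 less_imp_le[OF qpos])
    show "integrable p (\<lambda>d. (2 * t0) powr q + (\<Sum>j<J. c j * indicator (A j) d))"
      using int_sum by simp
    show "real d powr q * indicator {k. real k \<le> y} d \<le> (2 * t0) powr q + (\<Sum>j<J. c j * indicator (A j) d)" for d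
      unfolding c_def A_def by (rule truncated_power_le_lower_dyadic_sum[OF qpos t0pos J])
  qed
  also have "\<dots> = (2 * t0) powr q + measure_pmf.expectation p (\<lambda>d. \<Sum>j<J. c j * indicator (A j) d)"
    using Bochner_Integration.integral_add[OF measure_pmf.integrable_const int_sum] by simp
  also have "measure_pmf.expectation p (\<lambda>d. \<Sum>j<J. c j * indicator (A j) d)
      = (\<Sum>j<J. c j * survival (y / 2 ^ (j + 1)))"
    unfolding expectation_sum_indicators by (simp add: A_def survival_def)
  also have "(\<Sum>j<J. c j * survival (y / 2 ^ (j + 1))) \<le> 8 / (1 - \<rho>) * (y powr q * survival y)"
    unfolding c_def by (rule lower_dyadic_sum_le[OF q(1)]) (use J t0pos in \<open>simp add: field_simps\<close>)
  finally show ?thesis by simp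
qed

definition K_low :: real where "K_low = 4 + 4 * (2 * t0) powr 2"
text \<open>Beyond \<open>t1\<close> the constant \<open>K_low\<close> is absorbed into \<open>y^q survival y\<close>, which is at
  least \<open>c_low y^\<delta>\<close>.\<close>
definition t1 :: real where "t1 = max t0 ((K_low / c_low) powr (1 / \<delta>))"
definition C_low :: real where "C_low = 1 + 32 / (1 - \<rho>)"
definition C_up :: real where "C_up = 4 / (1 - \<rho>)"

lemma t1_ge: "t1 \<ge> t0" "t1 \<ge> 1"
  using t0_ge_1 by (auto simp: t1_def)

lemma C_pos: "C_low > 0" "C_up > 0"
proof -
  have r: "1 - \<rho> > 0" using rho_bounds by simp
  show "C_low > 0" using r unfolding C_low_def by (simp add: add_pos_nonneg)
  show "C_up > 0" using r unfolding C_up_def by simp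
qed

lemma K_low_le:
  assumes y: "y \<ge> t1" and q: "\<gamma> + 2 * \<delta> \<le> q"
  shows "K_low \<le> y powr q * survival y"
proof -
  have t1': "y \<ge> 1" "y \<ge> t0" using y t1_ge by auto
  have K0pos: "K_low > 0" unfolding K_low_def using powr_ge_zero[of "2 * t0" 2] by linarith
  have "K_low / c_low = ((K_low / c_low) powr (1 / \<delta>)) powr \<delta>"
    using K0pos c_low_pos delta_pos by (simp add: powr_powr)
  also have "\<dots> \<le> y powr \<delta>"
    by (rule powr_mono2) (use delta_pos y in \<open>auto simp: t1_def\<close>)
  finally have "K_low \<le> c_low * y powr \<delta>" using c_low_pos by (simp add: field_simps)
  also have "c_low * y powr \<delta> = c_low * y powr (- (\<gamma> + \<delta>)) * y powr (\<gamma> + 2 * \<delta>)"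
    using t1' by (simp add: mult.assoc powr_add[symmetric])
  also have "\<dots> \<le> survival y * y powr q"
    by (intro mult_mono survival_ge_power t1' powr_mono q) (use t1' survival_nonneg[of y] in auto)
  finally show ?thesis by (simp add: mult.commute)
qed

lemma lower_moment_le:
  assumes q: "\<gamma> + 2 * \<delta> \<le> q" "q \<le> 2" and y: "y \<ge> t1"
  shows "measure_pmf.expectation p (\<lambda>d. (real d + 1) powr q * indicator {k. real k \<le> y} d)
     \<le> C_low * (y powr q * survival y)"
proof -
  have qpos: "q > 0" using q gamma_gt_1 delta_pos by simp
  have y0: "y \<ge> t0" using y t1_ge by auto
  have int_power: "integrable p (\<lambda>d. real d powr q * indicator {k. real k \<le> y} d)"
    by (rule integrable_pmf_bounded[where B = "y powr q"])
       (auto simp: indicator_def intro!: powr_mono2 less_imp_le[OF qpos])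
  have "measure_pmf.expectation p (\<lambda>d. (real d + 1) powr q * indicator {k. real k \<le> y} d)
      \<le> measure_pmf.expectation p (\<lambda>d. 4 * (real d powr q * indicator {k. real k \<le> y} d) + 4)"
  proof (rule integral_mono)
    show "integrable p (\<lambda>d. (real d + 1) powr q * indicator {k. real k \<le> y} d)"
      by (rule integrable_pmf_bounded[where B = "(y + 1) powr q"])
         (auto simp: indicator_def intro!: powr_mono2 less_imp_le[OF qpos])
    show "(real d + 1) powr q * indicator {k. real k \<le> y} d \<le> 4 * (real d powr q * indicator {k. real k \<le> y} d) + 4"
      for d using plus1_powr_le[of "real d" q] qpos q by (auto simp: indicator_def)
  qed (use int_power in simp)
  also have "\<dots> = 4 * measure_pmf.expectation p (\<lambda>d. real d powr q * indicator {k. real k \<le> y} d) + 4"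
    using int_power by simp
  also have "\<dots> \<le> 4 * ((2 * t0) powr q + 8 / (1 - \<rho>) * (y powr q * survival y)) + 4"
    using lower_power_moment_le[OF q y0] by simp
  also have "\<dots> \<le> K_low + 32 / (1 - \<rho>) * (y powr q * survival y)"
    using powr_mono[of q 2 "2 * t0"] q t0_ge_1 by (simp add: K_low_def)
  also have "K_low \<le> y powr q * survival y" by (rule K_low_le[OF y q(1)])
  finally show ?thesis by (simp add: C_low_def algebra_simps)
qed

lemma scaled_lower_moment_le:
  assumes q: "\<gamma> + 2 * \<delta> \<le> q" "q \<le> 2" and l: "0 < l" "l \<le> 1" and ls: "l * s \<ge> t1"
  shows "measure_pmf.expectation p (\<lambda>d. ((real d + 1) / s) powr q * indicator {k. real k \<le> l * s} d)
     \<le> 8 * C_low * l powr (q - \<gamma> - \<delta>) * survival s"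
proof -
  have "l * s > 0" using ls t1_ge by linarith
  hence spos: "s > 0" using l by (simp add: zero_less_mult_iff)
  have Gb: "survival (l * s) \<le> 2 powr (\<gamma> + \<delta>) * l powr (- (\<gamma> + \<delta>)) * survival s"
  proof -
    have "survival (l * s) \<le> (2 * (1 / l)) powr (\<gamma> + \<delta>) * survival (1 / l * (l * s))"
      by (rule survival_le_mult) (use ls t1_ge l in auto)
    also have "1 / l * (l * s) = s" using l by simp
    also have "(2 * (1 / l)) powr (\<gamma> + \<delta>) = 2 powr (\<gamma> + \<delta>) * l powr (- (\<gamma> + \<delta>))"
    proof -
      have "l powr (- (\<gamma> + \<delta>)) = 1 / l powr (\<gamma> + \<delta>)" unfolding powr_minus by (simp add: divide_inverse)
      thus ?thesis using l by (simp add: powr_mult powr_divide)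
    qed
    finally show ?thesis .
  qed
  have "(\<lambda>d. ((real d + 1) / s) powr q * indicator {k. real k \<le> l * s} d)
      = (\<lambda>d. (real d + 1) powr q * indicator {k. real k \<le> l * s} d / s powr q)"
    by (simp add: powr_divide)
  hence "measure_pmf.expectation p (\<lambda>d. ((real d + 1) / s) powr q * indicator {k. real k \<le> l * s} d)
      = measure_pmf.expectation p (\<lambda>d. (real d + 1) powr q * indicator {k. real k \<le> l * s} d) / s powr q"
    by simp
  also have "\<dots> \<le> C_low * ((l * s) powr q * survival (l * s)) / s powr q"
    by (intro divide_right_mono lower_moment_le q ls) simp
  also have "\<dots> = C_low * l powr q * survival (l * s)" using spos l by (simp add: powr_mult)
  also have "\<dots> \<le> C_low * l powr q * (2 powr (\<gamma> + \<delta>) * l powr (- (\<gamma> + \<delta>)) * survival s)"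
    by (intro mult_left_mono Gb) (use C_pos in auto)
  also have "\<dots> = 2 powr (\<gamma> + \<delta>) * (C_low * (l powr q * l powr (- (\<gamma> + \<delta>))) * survival s)" by (simp add: mult_ac)
  also have "l powr q * l powr (- (\<gamma> + \<delta>)) = l powr (q - \<gamma> - \<delta>)" using l by (simp add: powr_add[symmetric] algebra_simps)
  also have "2 powr (\<gamma> + \<delta>) * (C_low * l powr (q - \<gamma> - \<delta>) * survival s) \<le> 8 * (C_low * l powr (q - \<gamma> - \<delta>) * survival s)"
    by (intro mult_right_mono two_powr_gamma_delta_le_8) (use C_pos survival_nonneg in auto)
  finally show ?thesis by (simp add: mult_ac)
qed

lemma scaled_upper_moment_le:
  assumes q: "0 \<le> q" "q \<le> \<gamma> - 2 * \<delta>" and l: "l \<ge> 1" and s: "s \<ge> t0"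
  shows "integrable p (\<lambda>d. ((real d + 1) / s) powr q * indicator {k. real k > l * s} d) \<and>
     measure_pmf.expectation p (\<lambda>d. ((real d + 1) / s) powr q * indicator {k. real k > l * s} d)
     \<le> 16 * C_up * l powr (q + \<delta> - \<gamma>) * survival s"
proof -
  have spos: "s > 0" using s t0_ge_1 by simp
  have ls: "l * s \<ge> t0" using s l t0_ge_1 by (smt (verit) mult_le_cancel_right1)
  have ls1: "l * s \<ge> 1" using ls t0_ge_1 by simp
  note m2 = upper_moment_le[OF q ls]
  have pw: "\<bar>((real d + 1) / s) powr q * indicator {k. real k > l * s} d\<bar>
      \<le> 4 / s powr q * (real d powr q * indicator {k. real k > l * s} d)" for d
  proof (cases "real d > l * s")
    case True
    hence "(real d + 1) powr q \<le> 4 * real d powr q"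
      using ls1 q gamma_lt_2 delta_pos by (intro plus1_powr_le_four_powr) auto
    thus ?thesis using True spos by (simp add: powr_divide divide_right_mono)
  qed simp
  have int: "integrable p (\<lambda>d. ((real d + 1) / s) powr q * indicator {k. real k > l * s} d)"
    by (rule Bochner_Integration.integrable_bound[where f = "\<lambda>d. 4 / s powr q * (real d powr q * indicator {k. real k > l * s} d)"])
       (use m2 pw in auto)
  have "measure_pmf.expectation p (\<lambda>d. ((real d + 1) / s) powr q * indicator {k. real k > l * s} d)
      \<le> measure_pmf.expectation p (\<lambda>d. 4 / s powr q * (real d powr q * indicator {k. real k > l * s} d))"
    by (rule integral_mono) (use int m2 pw in \<open>auto simp: abs_le_iff\<close>)
  also have "\<dots> = 4 / s powr q * measure_pmf.expectation p (\<lambda>d. real d powr q * indicator {k. real k > l * s} d)"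
    by simp
  also have "\<dots> \<le> 4 / s powr q * (4 / (1 - \<rho>) * ((l * s) powr q * survival (l * s)))"
    by (intro mult_left_mono) (use m2 in auto)
  also have "\<dots> = 4 * C_up * l powr q * survival (l * s)" using spos l by (simp add: powr_mult C_up_def)
  also have "survival (l * s) \<le> 2 powr \<gamma> * l powr (\<delta> - \<gamma>) * survival s" by (rule survival_mult_le[OF s l])
  hence "4 * C_up * l powr q * survival (l * s) \<le> 4 * C_up * l powr q * (2 powr \<gamma> * l powr (\<delta> - \<gamma>) * survival s)"
    by (intro mult_left_mono) (use C_pos in auto)
  also have "\<dots> = 2 powr \<gamma> * (4 * C_up * (l powr q * l powr (\<delta> - \<gamma>)) * survival s)" by (simp add: mult_ac)
  also have "l powr q * l powr (\<delta> - \<gamma>) = l powr (q + \<delta> - \<gamma>)" using l by (simp add: powr_add[symmetric] algebra_simps)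
  also have "2 powr \<gamma> * (4 * C_up * l powr (q + \<delta> - \<gamma>) * survival s) \<le> 4 * (4 * C_up * l powr (q + \<delta> - \<gamma>) * survival s)"
  proof (intro mult_right_mono)
    have "2 powr \<gamma> \<le> 2 powr 2" by (rule powr_mono) (use gamma_lt_2 in auto)
    thus "2 powr \<gamma> \<le> 4" by simp
  qed (use C_pos survival_nonneg in auto)
  finally show ?thesis using int by (simp add: mult_ac)
qed

lemma integrable_degree: "integrable p (\<lambda>d. real d)"
proof -
  have "4 * \<delta> \<le> \<gamma> - 1" using delta_le_gamma_minus_one by simp
  hence "1 \<le> \<gamma> - 2 * \<delta>" using delta_pos by linarith
  hence "integrable p (\<lambda>d. real d * indicator {k. real k > t0} d)"
    using upper_moment_le[of 1 t0] by simp
  moreover have "integrable p (\<lambda>d. real d * indicator {k. \<not> real k > t0} d)"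
    by (rule integrable_pmf_bounded[where B = t0]) (use t0_ge_1 in \<open>auto simp: indicator_def\<close>)
  ultimately have "integrable p (\<lambda>d. real d * indicator {k. real k > t0} d + real d * indicator {k. \<not> real k > t0} d)"
    by simp
  moreover have "(\<lambda>d. real d * indicator {k. real k > t0} d + real d * indicator {k. \<not> real k > t0} d) = (\<lambda>d. real d)"
    by (auto simp: indicator_def)
  ultimately show ?thesis by simp
qed

lemma mu_pos: "\<mu> > 0"
proof -
  have "survival 0 = measure_pmf.expectation p (indicator {k. real k > 0})"
    by (simp add: survival_def)
  also have "\<dots> \<le> measure_pmf.expectation p (\<lambda>d. real d)"
    by (rule integral_mono) (auto intro: integrable_degree integrable_pmf_bounded[where B = 1] simp: indicator_def)
  finally show ?thesis using survival_pos[of 0] mu by simp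
qed

end

section \<open>Bounding triangle weights by moments\<close>

definition edge_weight :: "real \<Rightarrow> real \<Rightarrow> real \<Rightarrow> real" where
  "edge_weight s x y = min 1 (4 * (x + 1) * (y + 1) / s\<^sup>2)"

definition triangle_weight :: "real \<Rightarrow> real \<Rightarrow> real \<Rightarrow> real \<Rightarrow> real" where
  "triangle_weight s x y z = edge_weight s x y * edge_weight s y z * edge_weight s x z"

lemma edge_weight_nonneg: "x \<ge> 0 \<Longrightarrow> y \<ge> 0 \<Longrightarrow> edge_weight s x y \<ge> 0"
  by (simp add: edge_weight_def)

lemma edge_weight_le_1: "edge_weight s x y \<le> 1"
  by (simp add: edge_weight_def)

lemma edge_weight_commute: "edge_weight s x y = edge_weight s y x"
proof -
  have "4 * (x + 1) * (y + 1) = 4 * (y + 1) * (x + 1)" by (simp only: mult_ac)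
  thus ?thesis unfolding edge_weight_def by simp
qed

lemma triangle_weight_perm:
  "triangle_weight s x y z = triangle_weight s y x z" "triangle_weight s x y z = triangle_weight s z x y"
  by (simp_all add: triangle_weight_def edge_weight_commute mult_ac)

lemma triangle_weight_nonneg: "x \<ge> 0 \<Longrightarrow> y \<ge> 0 \<Longrightarrow> z \<ge> 0 \<Longrightarrow> triangle_weight s x y z \<ge> 0"
  by (simp add: triangle_weight_def edge_weight_nonneg)

lemma triangle_weight_le_1: "x \<ge> 0 \<Longrightarrow> y \<ge> 0 \<Longrightarrow> z \<ge> 0 \<Longrightarrow> triangle_weight s x y z \<le> 1"
  unfolding triangle_weight_def by (intro mult_le_one edge_weight_le_1 edge_weight_nonneg mult_nonneg_nonneg) auto

lemma edge_weight_le_powr: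
  assumes s: "s > 0" and x: "x \<ge> 0" and y: "y \<ge> 0" and a: "0 \<le> a" "a \<le> 1"
  shows "edge_weight s x y \<le> 4 * (((x + 1) / s) powr a * ((y + 1) / s) powr a)"
proof -
  define t where "t = (x + 1) * (y + 1) / s\<^sup>2"
  have t_nonneg: "t \<ge> 0" using x y by (simp add: t_def)
  have teq: "t powr a = ((x + 1) / s) powr a * ((y + 1) / s) powr a"
  proof -
    have "t = ((x + 1) / s) * ((y + 1) / s)" by (simp add: t_def power2_eq_square)
    moreover have "(((x + 1) / s) * ((y + 1) / s)) powr a = ((x + 1) / s) powr a * ((y + 1) / s) powr a"
      by (rule powr_mult)
    ultimately show ?thesis by metis
  qed
  have "edge_weight s x y = min 1 (4 * t)" unfolding edge_weight_def t_def by (simp only: mult.assoc times_divide_eq_right)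
  also have "\<dots> \<le> 4 * t powr a"
  proof (cases "t \<ge> 1")
    case True
    hence "1 \<le> t powr a" using a by (simp add: ge_one_powr_ge_zero)
    thus ?thesis by simp
  next
    case False
    have "t \<le> t powr a"
    proof (cases "t = 0")
      case False
      hence "t powr 1 \<le> t powr a" using \<open>\<not> t \<ge> 1\<close> t_nonneg a by (intro powr_mono') auto
      thus ?thesis using False t_nonneg by simp
    qed simp
    thus ?thesis by simp
  qed
  finally show ?thesis by (simp add: teq)
qed

lemma triangle_weight_le_powr:
  assumes s: "s > 0" and x: "x \<ge> 0" and y: "y \<ge> 0" and z: "z \<ge> 0"
    and a: "0 \<le> a" "a \<le> 1" and b: "0 \<le> b" "b \<le> 1" and c: "0 \<le> c" "c \<le> 1"
  shows "triangle_weight s x y z \<le> 64 * (((x + 1) / s) powr (a + c) * ((y + 1) / s) powr (a + b) * ((z + 1) / s) powr (b + c))"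
proof -
  let ?X = "(x + 1) / s" and ?Y = "(y + 1) / s" and ?Z = "(z + 1) / s"
  have "triangle_weight s x y z \<le> (4 * (?X powr a * ?Y powr a)) * (4 * (?Y powr b * ?Z powr b)) * (4 * (?X powr c * ?Z powr c))"
    unfolding triangle_weight_def
    by (intro mult_mono edge_weight_le_powr edge_weight_nonneg s x y z a b c mult_nonneg_nonneg) auto
  also have "\<dots> = 64 * ((?X powr a * ?X powr c) * (?Y powr a * ?Y powr b) * (?Z powr b * ?Z powr c))"
    by (simp add: mult_ac)
  also have "\<dots> = 64 * (?X powr (a + c) * ?Y powr (a + b) * ?Z powr (b + c))"
    by (simp add: powr_add)
  finally show ?thesis .
qed

definition moment_weight :: "real \<Rightarrow> nat set \<Rightarrow> real \<Rightarrow> nat \<Rightarrow> real" where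
  "moment_weight s A q d = ((real d + 1) / s) powr q * indicator A d"

abbreviation low_weight :: "real \<Rightarrow> real \<Rightarrow> real \<Rightarrow> nat \<Rightarrow> real" where
  "low_weight s c \<equiv> moment_weight s {k. real k \<le> c}"

abbreviation high_weight :: "real \<Rightarrow> real \<Rightarrow> real \<Rightarrow> nat \<Rightarrow> real" where
  "high_weight s c \<equiv> moment_weight s {k. real k > c}"

lemma moment_weight_nonneg: "0 \<le> moment_weight s A q d"
  by (simp add: moment_weight_def)

lemma triangle_weight_le_moment_weights:
  assumes "d1 \<in> A1" "d2 \<in> A2" "d3 \<in> A3" and "s > 0"
    and "0 \<le> a" "a \<le> 1" "0 \<le> b" "b \<le> 1" "0 \<le> c" "c \<le> 1"
  shows "triangle_weight s (real d1) (real d2) (real d3)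
    \<le> 64 * (moment_weight s A1 (a + c) d1 * moment_weight s A2 (a + b) d2 * moment_weight s A3 (b + c) d3)"
  using triangle_weight_le_powr[of s "real d1" "real d2" "real d3" a b c] assms
  by (simp add: moment_weight_def)

lemma le_sum8:
  fixes t1 t2 t3 t4 t5 t6 t7 t8 :: real
  assumes "0 \<le> t1" "0 \<le> t2" "0 \<le> t3" "0 \<le> t4" "0 \<le> t5" "0 \<le> t6" "0 \<le> t7" "0 \<le> t8"
  shows "t1 \<le> t1 + t2 + t3 + t4 + t5 + t6 + t7 + t8" "t2 \<le> t1 + t2 + t3 + t4 + t5 + t6 + t7 + t8"
    "t3 \<le> t1 + t2 + t3 + t4 + t5 + t6 + t7 + t8" "t4 \<le> t1 + t2 + t3 + t4 + t5 + t6 + t7 + t8"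
    "t5 \<le> t1 + t2 + t3 + t4 + t5 + t6 + t7 + t8" "t6 \<le> t1 + t2 + t3 + t4 + t5 + t6 + t7 + t8"
    "t7 \<le> t1 + t2 + t3 + t4 + t5 + t6 + t7 + t8" "t8 \<le> t1 + t2 + t3 + t4 + t5 + t6 + t7 + t8"
  using assms by linarith+

lemma expectation_Pi_pmf_prod3:
  fixes f1 f2 f3 :: "nat \<Rightarrow> real" and q :: "nat pmf" and n v u w :: nat
  assumes vuw: "v < n" "u < n" "w < n" "v \<noteq> u" "v \<noteq> w" "u \<noteq> w"
    and int: "integrable q f1" "integrable q f2" "integrable q f3"
    and nn: "\<And>d. f1 d \<ge> 0" "\<And>d. f2 d \<ge> 0" "\<And>d. f3 d \<ge> 0"
  shows "integrable (Pi_pmf {..<n} 0 (\<lambda>_. q)) (\<lambda>D. f1 (D v) * f2 (D u) * f3 (D w))"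
    "measure_pmf.expectation (Pi_pmf {..<n} 0 (\<lambda>_. q)) (\<lambda>D. f1 (D v) * f2 (D u) * f3 (D w))
       = measure_pmf.expectation q f1 * measure_pmf.expectation q f2 * measure_pmf.expectation q f3"
proof -
  define F where "F = (\<lambda>x. if x = v then f1 else if x = u then f2 else if x = w then f3 else (\<lambda>_. 1::real))"
  have prodF: "(\<Prod>x\<in>{..<n}. g x) = g v * g u * g w" if "\<And>x::nat. x \<notin> {v, u, w} \<Longrightarrow> g x = 1" for g :: "nat \<Rightarrow> real"
  proof -
    have "(\<Prod>x\<in>{..<n}. g x) = (\<Prod>x\<in>{v, u, w}. g x)"
      by (rule prod.mono_neutral_right) (use vuw that in auto)
    also have "\<dots> = g v * g u * g w" using vuw by (simp add: mult_ac)
    finally show ?thesis .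
  qed
  have eqf: "(\<lambda>D. f1 (D v) * f2 (D u) * f3 (D w)) = (\<lambda>D. \<Prod>x\<in>{..<n}. F x (D x))"
  proof
    fix D :: "nat \<Rightarrow> nat"
    have "(\<Prod>x\<in>{..<n}. F x (D x)) = F v (D v) * F u (D u) * F w (D w)"
      by (rule prodF) (auto simp: F_def)
    also have "\<dots> = f1 (D v) * f2 (D u) * f3 (D w)" using vuw by (simp add: F_def)
    finally show "f1 (D v) * f2 (D u) * f3 (D w) = (\<Prod>x\<in>{..<n}. F x (D x))" by simp
  qed
  have intF: "integrable q (F x)" for x using int by (auto simp: F_def)
  have nnF: "F x y \<ge> 0" for x y using nn by (auto simp: F_def)
  show "integrable (Pi_pmf {..<n} 0 (\<lambda>_. q)) (\<lambda>D. f1 (D v) * f2 (D u) * f3 (D w))"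
    unfolding eqf by (rule integrable_prod_Pi_pmf) (auto intro: intF)
  have "measure_pmf.expectation (Pi_pmf {..<n} 0 (\<lambda>_. q)) (\<lambda>D. \<Prod>x\<in>{..<n}. F x (D x))
      = (\<Prod>x\<in>{..<n}. measure_pmf.expectation q (F x))"
    by (rule expectation_prod_Pi_pmf) (auto intro: intF nnF)
  also have "\<dots> = measure_pmf.expectation q (F v) * measure_pmf.expectation q (F u) * measure_pmf.expectation q (F w)"
    by (rule prodF) (auto simp: F_def)
  also have "\<dots> = measure_pmf.expectation q f1 * measure_pmf.expectation q f2 * measure_pmf.expectation q f3"
    using vuw by (simp add: F_def)
  finally show "measure_pmf.expectation (Pi_pmf {..<n} 0 (\<lambda>_. q)) (\<lambda>D. f1 (D v) * f2 (D u) * f3 (D w))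
       = measure_pmf.expectation q f1 * measure_pmf.expectation q f2 * measure_pmf.expectation q f3"
    unfolding eqf .
qed

definition expectation_bounded :: "'a pmf \<Rightarrow> ('a \<Rightarrow> real) \<Rightarrow> real \<Rightarrow> bool" where
  "expectation_bounded M f a \<longleftrightarrow> integrable M f \<and> measure_pmf.expectation M f \<le> a"

lemma expectation_bounded_add:
  "expectation_bounded M f a \<Longrightarrow> expectation_bounded M g b \<Longrightarrow> expectation_bounded M (\<lambda>x. f x + g x) (a + b)"
  unfolding expectation_bounded_def by (auto simp: Bochner_Integration.integral_add)

lemma expectation_bounded_prod3:
  fixes f1 f2 f3 :: "nat \<Rightarrow> real" and q :: "nat pmf" and n v u w :: nat
  assumes vuw: "v < n" "u < n" "w < n" "v \<noteq> u" "v \<noteq> w" "u \<noteq> w"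
    and int: "integrable q f1" "integrable q f2" "integrable q f3"
    and nn: "\<And>d. f1 d \<ge> 0" "\<And>d. f2 d \<ge> 0" "\<And>d. f3 d \<ge> 0"
    and b: "measure_pmf.expectation q f1 \<le> A1" "measure_pmf.expectation q f2 \<le> A2" "measure_pmf.expectation q f3 \<le> A3"
  shows "expectation_bounded (Pi_pmf {..<n} 0 (\<lambda>_. q)) (\<lambda>D. f1 (D v) * f2 (D u) * f3 (D w)) (A1 * A2 * A3)"
proof -
  note P = expectation_Pi_pmf_prod3[OF vuw int nn]
  have e: "measure_pmf.expectation q f1 \<ge> 0" "measure_pmf.expectation q f2 \<ge> 0" "measure_pmf.expectation q f3 \<ge> 0"
    using nn by (auto intro: Bochner_Integration.integral_nonneg)
  have "measure_pmf.expectation q f1 * measure_pmf.expectation q f2 * measure_pmf.expectation q f3 \<le> A1 * A2 * A3"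
    by (intro mult_mono b e mult_nonneg_nonneg) (use e b in auto)
  thus ?thesis unfolding expectation_bounded_def using P by simp
qed

lemma min_le_edge_weight:
  assumes s: "s > 0" and l: "real l - 5 \<ge> s\<^sup>2 / 4" and a: "a' \<le> a + 1" and b: "b' \<le> b + 1"
  shows "min 1 (real a' * real b' / (real l - 5)) \<le> edge_weight s (real a) (real b)"
proof -
  have lpos: "real l - 5 > 0" using l s by (smt (verit) zero_less_power divide_pos_pos)
  have "real a' * real b' \<le> (real a + 1) * (real b + 1)"
    using a b by (intro mult_mono) (auto simp flip: of_nat_Suc)
  hence "real a' * real b' / (real l - 5) \<le> (real a + 1) * (real b + 1) / (s\<^sup>2 / 4)"
    using lpos l s by (intro frac_le) auto
  also have "\<dots> = 4 * (real a + 1) * (real b + 1) / s\<^sup>2" by (simp add: field_simps)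
  finally show ?thesis unfolding edge_weight_def by linarith
qed

lemma sum_triples_le:
  fixes f :: "nat \<Rightarrow> nat \<Rightarrow> nat \<Rightarrow> real"
  assumes f: "\<And>i j k. i < j \<Longrightarrow> j < k \<Longrightarrow> k < n \<Longrightarrow> f i j k \<le> c" and c: "c \<ge> 0"
  shows "(\<Sum>i<n. \<Sum>j\<in>{i<..<n}. \<Sum>k\<in>{j<..<n}. f i j k) \<le> real n ^ 3 * c"
proof -
  have 1: "(\<Sum>k\<in>{j<..<n}. f i j k) \<le> real n * c" if "i < j" for i j
  proof -
    have "(\<Sum>k\<in>{j<..<n}. f i j k) \<le> (\<Sum>k\<in>{j<..<n}. c)" by (rule sum_mono) (use f that in auto)
    also have "\<dots> = real (card {j<..<n}) * c" by simp
    also have "\<dots> \<le> real n * c" by (intro mult_right_mono c) simp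
    finally show ?thesis .
  qed
  have 2: "(\<Sum>j\<in>{i<..<n}. \<Sum>k\<in>{j<..<n}. f i j k) \<le> real n * (real n * c)" for i
  proof -
    have "(\<Sum>j\<in>{i<..<n}. \<Sum>k\<in>{j<..<n}. f i j k) \<le> (\<Sum>j\<in>{i<..<n}. real n * c)" by (rule sum_mono) (rule 1, simp)
    also have "\<dots> = real (card {i<..<n}) * (real n * c)" by simp
    also have "\<dots> \<le> real n * (real n * c)" by (intro mult_right_mono) (use c in simp_all)
    finally show ?thesis .
  qed
  have "(\<Sum>i<n. \<Sum>j\<in>{i<..<n}. \<Sum>k\<in>{j<..<n}. f i j k) \<le> (\<Sum>i<n. real n * (real n * c))"
    by (rule sum_mono) (rule 2)
  also have "\<dots> = real n ^ 3 * c" by (simp add: power3_eq_cube)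
  finally show ?thesis .
qed

context regularly_varying_degrees
begin

text \<open>Exponents for the mixed regions: a low degree needs a moment exponent above \<open>\<gamma> + 2\<delta>\<close>
  and a high degree one below \<open>\<gamma> - 2\<delta>\<close>; the splits \<open>1 + \<theta>\<close> / \<open>2\<theta>\<close> and \<open>2 - 2\<eta>\<close> / \<open>1 - \<eta>\<close> do both.\<close>
definition \<theta> :: real where "\<theta> = (3 * \<gamma> - 2) / 4"
definition \<eta> :: real where "\<eta> = (2 - \<gamma>) / 4"
lemma theta_eta_bounds: "0 \<le> \<theta>" "\<theta> \<le> 1" "0 \<le> \<eta>" "\<eta> \<le> 1" "0 \<le> 1 - \<eta>" "1 - \<eta> \<le> 1"
  using gamma_gt_1 gamma_lt_2 by (auto simp: \<theta>_def \<eta>_def)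

definition region_majorant :: "real \<Rightarrow> real \<Rightarrow> nat \<Rightarrow> nat \<Rightarrow> nat \<Rightarrow> real" where
  "region_majorant s e d1 d2 d3 =
     low_weight s (e * s) 2 d1 * low_weight s s 2 d2 * low_weight s s 2 d3
   + low_weight s (e * s) (1 + \<theta>) d1 * low_weight s s (1 + \<theta>) d2 * high_weight s s (2 * \<theta>) d3
   + low_weight s (e * s) (1 + \<theta>) d1 * high_weight s s (2 * \<theta>) d2 * low_weight s s (1 + \<theta>) d3
   + low_weight s (e * s) (2 - 2 * \<eta>) d1 * high_weight s s (1 - \<eta>) d2 * high_weight s s (1 - \<eta>) d3
   + high_weight s (s / e) (2 * \<theta>) d1 * low_weight s s (1 + \<theta>) d2 * low_weight s s (1 + \<theta>) d3
   + high_weight s (s / e) (1 - \<eta>) d1 * low_weight s s (2 - 2 * \<eta>) d2 * high_weight s s (1 - \<eta>) d3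
   + high_weight s (s / e) (1 - \<eta>) d1 * high_weight s s (1 - \<eta>) d2 * low_weight s s (2 - 2 * \<eta>) d3
   + high_weight s (s / e) 0 d1 * high_weight s s 0 d2 * high_weight s s 0 d3"

lemma region_majorant_ge:
  "low_weight s (e * s) 2 d1 * low_weight s s 2 d2 * low_weight s s 2 d3 \<le> region_majorant s e d1 d2 d3"
  "low_weight s (e * s) (1 + \<theta>) d1 * low_weight s s (1 + \<theta>) d2 * high_weight s s (2 * \<theta>) d3
    \<le> region_majorant s e d1 d2 d3"
  "low_weight s (e * s) (1 + \<theta>) d1 * high_weight s s (2 * \<theta>) d2 * low_weight s s (1 + \<theta>) d3
    \<le> region_majorant s e d1 d2 d3"
  "low_weight s (e * s) (2 - 2 * \<eta>) d1 * high_weight s s (1 - \<eta>) d2 * high_weight s s (1 - \<eta>) d3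
    \<le> region_majorant s e d1 d2 d3"
  "high_weight s (s / e) (2 * \<theta>) d1 * low_weight s s (1 + \<theta>) d2 * low_weight s s (1 + \<theta>) d3
    \<le> region_majorant s e d1 d2 d3"
  "high_weight s (s / e) (1 - \<eta>) d1 * low_weight s s (2 - 2 * \<eta>) d2 * high_weight s s (1 - \<eta>) d3
    \<le> region_majorant s e d1 d2 d3"
  "high_weight s (s / e) (1 - \<eta>) d1 * high_weight s s (1 - \<eta>) d2 * low_weight s s (2 - 2 * \<eta>) d3
    \<le> region_majorant s e d1 d2 d3"
  "high_weight s (s / e) 0 d1 * high_weight s s 0 d2 * high_weight s s 0 d3 \<le> region_majorant s e d1 d2 d3"
  and region_majorant_nonneg: "0 \<le> region_majorant s e d1 d2 d3"
  unfolding region_majorant_def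
  by (intro le_sum8 add_nonneg_nonneg mult_nonneg_nonneg moment_weight_nonneg)+

lemma low_triangle_weight_le_majorant:
  assumes s: "s > 0" and d1: "real d1 < e * s"
  shows "triangle_weight s (real d1) (real d2) (real d3) \<le> 64 * region_majorant s e d1 d2 d3"
proof -
  let ?T = "triangle_weight s (real d1) (real d2) (real d3)"
  note tw = triangle_weight_le_moment_weights[OF _ _ _ s]
  consider "real d2 \<le> s" "real d3 \<le> s" | "real d2 \<le> s" "real d3 > s"
    | "real d2 > s" "real d3 \<le> s" | "real d2 > s" "real d3 > s" by linarith
  thus ?thesis
  proof cases
    case 1
    with d1 have "?T \<le> 64 * (low_weight s (e * s) 2 d1 * low_weight s s 2 d2 * low_weight s s 2 d3)"
      using tw[of d1 _ d2 _ d3 _ 1 1 1] by simp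
    thus ?thesis using region_majorant_ge(1)[of s e d1 d2 d3] by linarith
  next
    case 2
    with d1 have "?T \<le> 64 * (low_weight s (e * s) (1 + \<theta>) d1 * low_weight s s (1 + \<theta>) d2
        * high_weight s s (2 * \<theta>) d3)"
      using tw[of d1 _ d2 _ d3 _ 1 \<theta> \<theta>] theta_eta_bounds by simp
    thus ?thesis using region_majorant_ge(2)[of s e d1 d2 d3] by linarith
  next
    case 3
    with d1 have "?T \<le> 64 * (low_weight s (e * s) (1 + \<theta>) d1 * high_weight s s (2 * \<theta>) d2
        * low_weight s s (1 + \<theta>) d3)"
      using tw[of d1 _ d2 _ d3 _ \<theta> \<theta> 1] theta_eta_bounds by (simp add: add.commute)
    thus ?thesis using region_majorant_ge(3)[of s e d1 d2 d3] by linarith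
  next
    case 4
    with d1 have "?T \<le> 64 * (low_weight s (e * s) (2 - 2 * \<eta>) d1 * high_weight s s (1 - \<eta>) d2
        * high_weight s s (1 - \<eta>) d3)"
      using tw[of d1 _ d2 _ d3 _ "1 - \<eta>" 0 "1 - \<eta>"] theta_eta_bounds by simp
    thus ?thesis using region_majorant_ge(4)[of s e d1 d2 d3] by linarith
  qed
qed

lemma high_triangle_weight_le_majorant:
  assumes s: "s > 0" and d1: "real d1 > s / e"
  shows "triangle_weight s (real d1) (real d2) (real d3) \<le> 64 * region_majorant s e d1 d2 d3"
proof -
  let ?T = "triangle_weight s (real d1) (real d2) (real d3)"
  note tw = triangle_weight_le_moment_weights[OF _ _ _ s]
  consider "real d2 \<le> s" "real d3 \<le> s" | "real d2 \<le> s" "real d3 > s"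
    | "real d2 > s" "real d3 \<le> s" | "real d2 > s" "real d3 > s" by linarith
  thus ?thesis
  proof cases
    case 1
    with d1 have "?T \<le> 64 * (high_weight s (s / e) (2 * \<theta>) d1 * low_weight s s (1 + \<theta>) d2
        * low_weight s s (1 + \<theta>) d3)"
      using tw[of d1 _ d2 _ d3 _ \<theta> 1 \<theta>] theta_eta_bounds by (simp add: add.commute)
    thus ?thesis using region_majorant_ge(5)[of s e d1 d2 d3] by linarith
  next
    case 2
    with d1 have "?T \<le> 64 * (high_weight s (s / e) (1 - \<eta>) d1 * low_weight s s (2 - 2 * \<eta>) d2
        * high_weight s s (1 - \<eta>) d3)"
      using tw[of d1 _ d2 _ d3 _ "1 - \<eta>" "1 - \<eta>" 0] theta_eta_bounds by simp
    thus ?thesis using region_majorant_ge(6)[of s e d1 d2 d3] by linarith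
  next
    case 3
    with d1 have "?T \<le> 64 * (high_weight s (s / e) (1 - \<eta>) d1 * high_weight s s (1 - \<eta>) d2
        * low_weight s s (2 - 2 * \<eta>) d3)"
      using tw[of d1 _ d2 _ d3 _ 0 "1 - \<eta>" "1 - \<eta>"] theta_eta_bounds by simp
    thus ?thesis using region_majorant_ge(7)[of s e d1 d2 d3] by linarith
  next
    case 4
    with d1 s have "?T \<le> 64 * (high_weight s (s / e) 0 d1 * high_weight s s 0 d2 * high_weight s s 0 d3)"
      using tw[of d1 _ d2 _ d3 _ 0 0 0] by simp
    thus ?thesis using region_majorant_ge(8)[of s e d1 d2 d3] by linarith
  qed
qed

lemma outside_triangle_weight_le_majorant:
  assumes "s > 0"
  shows "indicator {k. real k < e * s \<or> real k > s / e} d1 * triangle_weight s (real d1) (real d2) (real d3)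
     \<le> 64 * region_majorant s e d1 d2 d3"
proof (cases "real d1 < e * s \<or> real d1 > s / e")
  case True
  thus ?thesis using low_triangle_weight_le_majorant[OF assms] high_triangle_weight_le_majorant[OF assms] by auto
next
  case False
  thus ?thesis using region_majorant_nonneg by simp
qed

definition K_mom :: real where "K_mom = 8 * C_low + 16 * C_up"

lemma K_mom_pos: "K_mom > 0"
  using C_pos by (simp add: K_mom_def)

lemma exponent_bounds:
  "\<gamma> + 2 * \<delta> \<le> 2" "\<gamma> + 2 * \<delta> \<le> 1 + \<theta>" "1 + \<theta> \<le> 2" "\<gamma> + 2 * \<delta> \<le> 2 - 2 * \<eta>" "2 - 2 * \<eta> \<le> 2"
  "0 \<le> 2 * \<theta>" "2 * \<theta> \<le> \<gamma> - 2 * \<delta>" "0 \<le> 1 - \<eta>" "1 - \<eta> \<le> \<gamma> - 2 * \<delta>" "0 \<le> \<gamma> - 2 * \<delta>"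
proof -
  have a: "8 * \<delta> \<le> 2 - \<gamma>" using delta_le_two_minus_gamma by simp
  have b: "4 * \<delta> \<le> \<gamma> - 1" using delta_le_gamma_minus_one by simp
  have c: "4 * \<theta> = 3 * \<gamma> - 2" "4 * \<eta> = 2 - \<gamma>" by (simp_all add: \<theta>_def \<eta>_def)
  note f = a b c delta_pos gamma_gt_1 gamma_lt_2
  show "\<gamma> + 2 * \<delta> \<le> 2" using f by linarith
  show "\<gamma> + 2 * \<delta> \<le> 1 + \<theta>" using f by linarith
  show "1 + \<theta> \<le> 2" using f by linarith
  show "\<gamma> + 2 * \<delta> \<le> 2 - 2 * \<eta>" using f by linarith
  show "2 - 2 * \<eta> \<le> 2" using f by linarith
  show "0 \<le> 2 * \<theta>" using f by linarith
  show "2 * \<theta> \<le> \<gamma> - 2 * \<delta>" using f by linarith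
  show "0 \<le> 1 - \<eta>" using f by linarith
  show "1 - \<eta> \<le> \<gamma> - 2 * \<delta>" using f by linarith
  show "0 \<le> \<gamma> - 2 * \<delta>" using f by linarith
qed

lemma integrable_low_weight:
  assumes s: "s > 0" and q: "q \<ge> 0" shows "integrable p (low_weight s c q)"
proof (rule integrable_pmf_bounded[where B = "((max c 0 + 1) / s) powr q"])
  fix d
  show "\<bar>low_weight s c q d\<bar> \<le> ((max c 0 + 1) / s) powr q"
  proof (cases "real d \<le> c")
    case True
    have "((real d + 1) / s) powr q \<le> ((max c 0 + 1) / s) powr q"
      by (rule powr_mono2) (use True s q in \<open>auto intro!: divide_right_mono\<close>)
    thus ?thesis using True by (simp add: moment_weight_def)
  qed (simp add: moment_weight_def)
qed

lemma powr_le_powr_delta: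
  assumes e: "0 < e" "e < 1" and a: "\<delta> \<le> a"
  shows "e powr a \<le> e powr \<delta>"
  by (rule powr_mono') (use e a in auto)

lemma expectation_low_weight_eps_le:
  assumes q: "\<gamma> + 2 * \<delta> \<le> q" "q \<le> 2" and e: "0 < e" "e < 1" and es: "e * s \<ge> t1"
  shows "integrable p (low_weight s (e * s) q) \<and> measure_pmf.expectation p (low_weight s (e * s) q) \<le> K_mom * e powr \<delta> * survival s"
proof
  have "e * s > 0" using es t1_ge by linarith
  hence s: "s > 0" using e by (simp add: zero_less_mult_iff)
  show "integrable p (low_weight s (e * s) q)" by (rule integrable_low_weight[OF s]) (use q exponent_bounds gamma_gt_1 delta_pos in auto)
  have "measure_pmf.expectation p (low_weight s (e * s) q) \<le> 8 * C_low * e powr (q - \<gamma> - \<delta>) * survival s"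
    unfolding moment_weight_def by (rule scaled_lower_moment_le[OF q]) (use e es in auto)
  also have "\<dots> \<le> 8 * C_low * e powr \<delta> * survival s"
    by (intro mult_right_mono mult_left_mono powr_le_powr_delta e) (use q C_pos survival_nonneg in auto)
  also have "\<dots> \<le> K_mom * e powr \<delta> * survival s"
    by (intro mult_right_mono) (use C_pos survival_nonneg in \<open>auto simp: K_mom_def\<close>)
  finally show "measure_pmf.expectation p (low_weight s (e * s) q) \<le> K_mom * e powr \<delta> * survival s" .
qed

lemma expectation_low_weight_le:
  assumes q: "\<gamma> + 2 * \<delta> \<le> q" "q \<le> 2" and s: "s \<ge> t1"
  shows "integrable p (low_weight s s q) \<and> measure_pmf.expectation p (low_weight s s q) \<le> K_mom * survival s"
proof
  have s0: "s > 0" using s t1_ge by linarith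
  show "integrable p (low_weight s s q)" by (rule integrable_low_weight[OF s0]) (use q exponent_bounds gamma_gt_1 delta_pos in auto)
  have "measure_pmf.expectation p (low_weight s s q) \<le> 8 * C_low * 1 powr (q - \<gamma> - \<delta>) * survival s"
    using scaled_lower_moment_le[OF q, of 1 s] s unfolding moment_weight_def by simp
  also have "\<dots> \<le> K_mom * survival s"
    by (intro mult_right_mono) (use C_pos survival_nonneg in \<open>auto simp: K_mom_def\<close>)
  finally show "measure_pmf.expectation p (low_weight s s q) \<le> K_mom * survival s" .
qed

lemma expectation_high_weight_le:
  assumes q: "0 \<le> q" "q \<le> \<gamma> - 2 * \<delta>" and s: "s \<ge> t0"
  shows "integrable p (high_weight s s q) \<and> measure_pmf.expectation p (high_weight s s q) \<le> K_mom * survival s"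
proof -
  have b: "integrable p (high_weight s s q) \<and> measure_pmf.expectation p (high_weight s s q) \<le> 16 * C_up * 1 powr (q + \<delta> - \<gamma>) * survival s"
    using scaled_upper_moment_le[OF q _ s, of 1] unfolding moment_weight_def by simp
  have "16 * C_up * 1 powr (q + \<delta> - \<gamma>) * survival s \<le> K_mom * survival s"
    by (intro mult_right_mono) (use C_pos survival_nonneg in \<open>auto simp: K_mom_def\<close>)
  thus ?thesis using b by linarith
qed

lemma expectation_high_weight_eps_le:
  assumes q: "0 \<le> q" "q \<le> \<gamma> - 2 * \<delta>" and e: "0 < e" "e < 1" and s: "s \<ge> t0"
  shows "integrable p (high_weight s (s / e) q) \<and> measure_pmf.expectation p (high_weight s (s / e) q) \<le> K_mom * e powr \<delta> * survival s"
proof -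
  have eq: "1 / e * s = s / e" by simp
  have b: "integrable p (high_weight s (s / e) q) \<and> measure_pmf.expectation p (high_weight s (s / e) q) \<le> 16 * C_up * (1 / e) powr (q + \<delta> - \<gamma>) * survival s"
    using scaled_upper_moment_le[OF q _ s, of "1 / e"] e unfolding moment_weight_def eq by simp
  have "(1 / e) powr (q + \<delta> - \<gamma>) = e powr (\<gamma> - q - \<delta>)"
    using e by (simp add: powr_divide powr_minus_divide[symmetric] algebra_simps)
  also have "\<dots> \<le> e powr \<delta>" by (rule powr_le_powr_delta) (use e q in auto)
  finally have "16 * C_up * (1 / e) powr (q + \<delta> - \<gamma>) * survival s \<le> 16 * C_up * e powr \<delta> * survival s"
    by (intro mult_right_mono mult_left_mono) (use C_pos survival_nonneg in auto)
  also have "\<dots> \<le> K_mom * e powr \<delta> * survival s"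
    by (intro mult_right_mono) (use C_pos survival_nonneg in \<open>auto simp: K_mom_def\<close>)
  finally show ?thesis using b by linarith
qed

lemma expectation_region_majorant_le:
  fixes n v u w :: nat
  assumes vuw: "v < n" "u < n" "w < n" "v \<noteq> u" "v \<noteq> w" "u \<noteq> w"
    and e: "0 < e" "e < 1" and es: "e * s \<ge> t1"
  shows "expectation_bounded (Pi_pmf {..<n} 0 (\<lambda>_. p)) (\<lambda>D. region_majorant s e (D v) (D u) (D w))
    (8 * K_mom ^ 3 * e powr \<delta> * survival s ^ 3)"
proof -
  let ?M = "Pi_pmf {..<n} 0 (\<lambda>_. p)"
  have "e * s > 0" using es t1_ge by linarith
  hence "s > 0" using e by (simp add: zero_less_mult_iff)
  hence "e * s \<le> s" using e by simp
  hence s1: "s \<ge> t1" and sx: "s \<ge> t0" using es t1_ge by linarith+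
  define A where "A = K_mom * e powr \<delta> * survival s"
  define B where "B = K_mom * survival s"
  note nn = moment_weight_nonneg
  note T = expectation_bounded_prod3[OF vuw]
  note ex = exponent_bounds
  have ES: "integrable p (low_weight s (e * s) q) \<and> measure_pmf.expectation p (low_weight s (e * s) q) \<le> A"
    if "\<gamma> + 2 * \<delta> \<le> q" "q \<le> 2" for q
    using expectation_low_weight_eps_le[OF that e es] by (simp add: A_def)
  have EB: "integrable p (high_weight s (s / e) q) \<and> measure_pmf.expectation p (high_weight s (s / e) q) \<le> A"
    if "0 \<le> q" "q \<le> \<gamma> - 2 * \<delta>" for q
    using expectation_high_weight_eps_le[OF that e sx] by (simp add: A_def)
  have ES1: "integrable p (low_weight s s q) \<and> measure_pmf.expectation p (low_weight s s q) \<le> B"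
    if "\<gamma> + 2 * \<delta> \<le> q" "q \<le> 2" for q
    using expectation_low_weight_le[OF that s1] by (simp add: B_def)
  have EB1: "integrable p (high_weight s s q) \<and> measure_pmf.expectation p (high_weight s s q) \<le> B"
    if "0 \<le> q" "q \<le> \<gamma> - 2 * \<delta>" for q
    using expectation_high_weight_le[OF that sx] by (simp add: B_def)
  have "expectation_bounded ?M (\<lambda>D. region_majorant s e (D v) (D u) (D w))
      (A * B * B + A * B * B + A * B * B + A * B * B + A * B * B + A * B * B + A * B * B + A * B * B)"
    unfolding region_majorant_def
  proof (intro expectation_bounded_add)
    show "expectation_bounded ?M (\<lambda>D. low_weight s (e * s) 2 (D v) * low_weight s s 2 (D u)
        * low_weight s s 2 (D w)) (A * B * B)"
      using ES[of 2] ES1[of 2] ex by (intro T) (auto simp: nn)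
    show "expectation_bounded ?M (\<lambda>D. low_weight s (e * s) (1 + \<theta>) (D v) * low_weight s s (1 + \<theta>) (D u)
        * high_weight s s (2 * \<theta>) (D w)) (A * B * B)"
      using ES[of "1 + \<theta>"] ES1[of "1 + \<theta>"] EB1[of "2 * \<theta>"] ex by (intro T) (auto simp: nn)
    show "expectation_bounded ?M (\<lambda>D. low_weight s (e * s) (1 + \<theta>) (D v) * high_weight s s (2 * \<theta>) (D u)
        * low_weight s s (1 + \<theta>) (D w)) (A * B * B)"
      using ES[of "1 + \<theta>"] ES1[of "1 + \<theta>"] EB1[of "2 * \<theta>"] ex by (intro T) (auto simp: nn)
    show "expectation_bounded ?M (\<lambda>D. low_weight s (e * s) (2 - 2 * \<eta>) (D v) * high_weight s s (1 - \<eta>) (D u)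
        * high_weight s s (1 - \<eta>) (D w)) (A * B * B)"
      using ES[of "2 - 2 * \<eta>"] EB1[of "1 - \<eta>"] ex by (intro T) (auto simp: nn)
    show "expectation_bounded ?M (\<lambda>D. high_weight s (s / e) (2 * \<theta>) (D v) * low_weight s s (1 + \<theta>) (D u)
        * low_weight s s (1 + \<theta>) (D w)) (A * B * B)"
      using EB[of "2 * \<theta>"] ES1[of "1 + \<theta>"] ex by (intro T) (auto simp: nn)
    show "expectation_bounded ?M (\<lambda>D. high_weight s (s / e) (1 - \<eta>) (D v) * low_weight s s (2 - 2 * \<eta>) (D u)
        * high_weight s s (1 - \<eta>) (D w)) (A * B * B)"
      using EB[of "1 - \<eta>"] ES1[of "2 - 2 * \<eta>"] EB1[of "1 - \<eta>"] ex by (intro T) (auto simp: nn)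
    show "expectation_bounded ?M (\<lambda>D. high_weight s (s / e) (1 - \<eta>) (D v) * high_weight s s (1 - \<eta>) (D u)
        * low_weight s s (2 - 2 * \<eta>) (D w)) (A * B * B)"
      using EB[of "1 - \<eta>"] ES1[of "2 - 2 * \<eta>"] EB1[of "1 - \<eta>"] ex by (intro T) (auto simp: nn)
    show "expectation_bounded ?M (\<lambda>D. high_weight s (s / e) 0 (D v) * high_weight s s 0 (D u)
        * high_weight s s 0 (D w)) (A * B * B)"
      using EB[of 0] EB1[of 0] ex by (intro T) (auto simp: nn)
  qed
  thus ?thesis by (simp add: A_def B_def power3_eq_cube algebra_simps)
qed

lemma expectation_outside_triangle_weight_le:
  fixes n v u w :: nat
  assumes vuw: "v < n" "u < n" "w < n" "v \<noteq> u" "v \<noteq> w" "u \<noteq> w"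
    and e: "0 < e" "e < 1" and es: "e * s \<ge> t1"
  shows "measure_pmf.expectation (Pi_pmf {..<n} 0 (\<lambda>_. p))
      (\<lambda>D. indicator {k. real k < e * s \<or> real k > s / e} (D v) * triangle_weight s (real (D v)) (real (D u)) (real (D w)))
     \<le> 512 * K_mom ^ 3 * e powr \<delta> * survival s ^ 3"
proof -
  let ?M = "Pi_pmf {..<n} 0 (\<lambda>_. p)"
  have "e * s > 0" using es t1_ge by linarith
  hence spos: "s > 0" using e by (simp add: zero_less_mult_iff)
  note majorant = expectation_region_majorant_le[OF vuw e es]
  have "integrable ?M (\<lambda>D. indicator {k. real k < e * s \<or> real k > s / e} (D v)
      * triangle_weight s (real (D v)) (real (D u)) (real (D w)))"
    by (rule integrable_pmf_bounded[where B = 1])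
       (auto simp: indicator_def abs_le_iff triangle_weight_nonneg triangle_weight_le_1)
  hence "measure_pmf.expectation ?M (\<lambda>D. indicator {k. real k < e * s \<or> real k > s / e} (D v)
      * triangle_weight s (real (D v)) (real (D u)) (real (D w)))
    \<le> measure_pmf.expectation ?M (\<lambda>D. 64 * region_majorant s e (D v) (D u) (D w))"
    using majorant outside_triangle_weight_le_majorant[OF spos]
    by (intro integral_mono) (auto simp: expectation_bounded_def)
  also have "\<dots> \<le> 64 * (8 * K_mom ^ 3 * e powr \<delta> * survival s ^ 3)"
    using majorant by (simp add: expectation_bounded_def mult_ac)
  finally show ?thesis by simp
qed

end

section \<open>Expected number of triangles with a degree outside the window\<close>

definition outside_indicator :: "real set \<Rightarrow> (nat \<Rightarrow> nat) \<Rightarrow> nat \<Rightarrow> nat \<Rightarrow> nat \<Rightarrow> real" where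
  "outside_indicator W d i j k = (if real (d i) \<notin> W \<or> real (d j) \<notin> W \<or> real (d k) \<notin> W then 1 else 0)"

lemma tri_out_eq:
  "tri_out \<mu> n e d m
    = (\<Sum>i<n. \<Sum>j\<in>{i<..<n}. \<Sum>k\<in>{j<..<n}. outside_indicator (Bn \<mu> n e) d i j k * ecm_triangle n d m i j k)"
  unfolding tri_out_def outside_indicator_def ecm_triangle_def by (simp add: mult.commute)

lemma tri_out_nonneg: "0 \<le> tri_out \<mu> n e d m"
  unfolding tri_out_eq outside_indicator_def by (intro sum_nonneg) (simp add: ecm_triangle_nonneg)

lemma tri_out_le_cube: "tri_out \<mu> n e d m \<le> real n ^ 3"
  using sum_triples_le[of n "\<lambda>i j k. outside_indicator (Bn \<mu> n e) d i j k * ecm_triangle n d m i j k" 1]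
  by (simp add: tri_out_eq outside_indicator_def ecm_triangle_le_1 ecm_triangle_nonneg)

lemma matching_average_tri_out_eq:
  "matching_average n d (tri_out \<mu> n e d) = (\<Sum>i<n. \<Sum>j\<in>{i<..<n}. \<Sum>k\<in>{j<..<n}.
      outside_indicator (Bn \<mu> n e) d i j k * matching_average n d (\<lambda>m. ecm_triangle n d m i j k))"
proof -
  let ?M = "matchings (half_edges n d)"
  have "(\<Sum>m\<in>?M. tri_out \<mu> n e d m) = (\<Sum>i<n. \<Sum>j\<in>{i<..<n}. \<Sum>k\<in>{j<..<n}.
      outside_indicator (Bn \<mu> n e) d i j k * (\<Sum>m\<in>?M. ecm_triangle n d m i j k))"
    unfolding tri_out_eq sum_distrib_left
    by (subst sum.swap, rule sum.cong[OF refl], subst sum.swap, rule sum.cong[OF refl], subst sum.swap) simp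
  thus ?thesis by (simp add: matching_average_def sum_divide_distrib[symmetric])
qed

text \<open>A total degree of at least \<open>s\<^sup>2 / 2\<close> leaves at least \<open>s\<^sup>2 / 4\<close> in the denominator
  of each edge factor, whence the constant \<open>4\<close> in \<open>edge_weight\<close>.\<close>
lemma matching_average_triangle_le_triangle_weight:
  assumes s: "s > 0" "s\<^sup>2 \<ge> 20" and total: "real (\<Sum>i<n. d i) \<ge> s\<^sup>2 / 2" and ijk: "i < j" "j < k" "k < n"
  shows "matching_average n d (\<lambda>m. ecm_triangle n d m i j k) \<le> triangle_weight s (real (d i)) (real (d j)) (real (d k))"
proof -
  let ?l = "card (half_edges n d)"
  have l: "real ?l - 5 \<ge> s\<^sup>2 / 4" using sum_le_card_half_edges[where n = n and d = d] total s by linarith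
  have "matching_average n d (\<lambda>m. ecm_triangle n d m i j k)
      \<le> min 1 (real (deg_ext n d i) * real (deg_ext n d j) / (real ?l - 5)) *
         min 1 (real (deg_ext n d j) * real (deg_ext n d k) / (real ?l - 5)) *
         min 1 (real (deg_ext n d i) * real (deg_ext n d k) / (real ?l - 5))"
    using matching_average_triangle_le[OF ijk] l s by simp
  also have "\<dots> \<le> edge_weight s (real (d i)) (real (d j)) * edge_weight s (real (d j)) (real (d k))
      * edge_weight s (real (d i)) (real (d k))"
    using l s
    by (intro mult_mono min_le_edge_weight deg_ext_le edge_weight_nonneg mult_nonneg_nonneg) auto
  finally show ?thesis by (simp add: triangle_weight_def)
qed

lemma matching_average_tri_out_le:
  assumes mun: "\<mu> * real n \<ge> 20" "\<mu> > 0"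
  defines "s \<equiv> sqrt (\<mu> * real n)"
  shows "matching_average n d (tri_out \<mu> n e d)
    \<le> (\<Sum>i<n. \<Sum>j\<in>{i<..<n}. \<Sum>k\<in>{j<..<n}.
          outside_indicator (Bn \<mu> n e) d i j k * triangle_weight s (real (d i)) (real (d j)) (real (d k)))
      + real n ^ 3 * indicator {d. real (\<Sum>i<n. d i) < \<mu> * real n / 2} d"
proof (cases "real (\<Sum>i<n. d i) < \<mu> * real n / 2")
  case True
  have "matching_average n d (tri_out \<mu> n e d) \<le> real n ^ 3"
    using matching_average_mono[of "tri_out \<mu> n e d" "\<lambda>_. real n ^ 3" n d] by (simp add: tri_out_le_cube)
  moreover have "0 \<le> (\<Sum>i<n. \<Sum>j\<in>{i<..<n}. \<Sum>k\<in>{j<..<n}.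
      outside_indicator (Bn \<mu> n e) d i j k * triangle_weight s (real (d i)) (real (d j)) (real (d k)))"
    by (intro sum_nonneg) (simp add: outside_indicator_def triangle_weight_nonneg)
  ultimately show ?thesis using True by (simp add: indicator_def)
next
  case False
  have s: "s > 0" "s\<^sup>2 = \<mu> * real n" using mun by (simp_all add: s_def)
  have "matching_average n d (tri_out \<mu> n e d)
      \<le> (\<Sum>i<n. \<Sum>j\<in>{i<..<n}. \<Sum>k\<in>{j<..<n}.
          outside_indicator (Bn \<mu> n e) d i j k * triangle_weight s (real (d i)) (real (d j)) (real (d k)))"
    unfolding matching_average_tri_out_eq
    by (intro sum_mono mult_left_mono matching_average_triangle_le_triangle_weight)
       (use s mun False in \<open>auto simp: outside_indicator_def\<close>)
  thus ?thesis using False by (simp add: indicator_def)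
qed

lemma expectation_cm_model:
  fixes F :: "(nat \<Rightarrow> nat) \<Rightarrow> (nat \<times> nat \<Rightarrow> nat \<times> nat) \<Rightarrow> real"
  assumes nn: "\<And>d m. 0 \<le> F d m" and bd: "\<And>d m. F d m \<le> B"
  shows "measure_pmf.expectation (cm_model n p) (\<lambda>(d, m). F d m)
    = measure_pmf.expectation (Pi_pmf {..<n} 0 (\<lambda>_. p)) (\<lambda>d. matching_average n d (F d))"
proof -
  let ?D = "Pi_pmf {..<n} 0 (\<lambda>_. p)"
  have avg_nonneg: "0 \<le> matching_average n d (F d)" for d
    using matching_average_mono[of "\<lambda>_. 0" "F d" n d] nn by simp
  have avg_le: "matching_average n d (F d) \<le> B" for d
    using matching_average_mono[of "F d" "\<lambda>_. B" n d] bd by simp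
  have inner: "(\<integral>\<^sup>+ m. ennreal (F d m) \<partial>measure_pmf (pmf_of_set (matchings (half_edges n d))))
      = ennreal (matching_average n d (F d))" for d
  proof -
    have "(\<integral>\<^sup>+ m. ennreal (F d m) \<partial>measure_pmf (pmf_of_set (matchings (half_edges n d))))
        = ennreal (measure_pmf.expectation (pmf_of_set (matchings (half_edges n d))) (F d))"
      by (rule nn_integral_eq_integral) (auto intro!: integrable_pmf_bounded[where B = B] simp: nn abs_of_nonneg bd)
    thus ?thesis
      by (simp add: integral_pmf_of_set[OF matchings_half_edges_nonempty finite_matchings_half_edges]
          matching_average_def)
  qed
  have "ennreal (measure_pmf.expectation (cm_model n p) (\<lambda>(d, m). F d m))
      = (\<integral>\<^sup>+ x. ennreal ((\<lambda>(d, m). F d m) x) \<partial>measure_pmf (cm_model n p))"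
    by (rule nn_integral_eq_integral[symmetric])
       (auto intro!: integrable_pmf_bounded[where B = B] simp: nn abs_of_nonneg bd split: prod.splits)
  also have "\<dots> = (\<integral>\<^sup>+ d. ennreal (matching_average n d (F d)) \<partial>measure_pmf ?D)"
    by (simp add: cm_model_def inner)
  also have "\<dots> = ennreal (measure_pmf.expectation ?D (\<lambda>d. matching_average n d (F d)))"
    by (rule nn_integral_eq_integral)
       (auto intro!: integrable_pmf_bounded[where B = B] simp: avg_nonneg abs_of_nonneg avg_le)
  finally show ?thesis
    by (simp add: avg_nonneg nn Bochner_Integration.integral_nonneg split: prod.splits)
qed

lemma expectation_sum_triples:
  fixes g :: "nat \<Rightarrow> nat \<Rightarrow> nat \<Rightarrow> 'a \<Rightarrow> real"
  assumes "\<And>i j k. integrable (measure_pmf M) (g i j k)"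
  shows "measure_pmf.expectation M (\<lambda>x. \<Sum>i<n. \<Sum>j\<in>{i<..<n}. \<Sum>k\<in>{j<..<n}. g i j k x)
    = (\<Sum>i<n. \<Sum>j\<in>{i<..<n}. \<Sum>k\<in>{j<..<n}. measure_pmf.expectation M (g i j k))"
  using assms by (simp add: Bochner_Integration.integral_sum Bochner_Integration.integrable_sum)

context regularly_varying_degrees
begin

text \<open>A triple with some degree outside the window is charged to that vertex; the symmetry of
  \<open>triangle_weight\<close> lets the outside vertex always come first.\<close>
lemma expectation_outside_triple_le:
  assumes ijk: "i < n" "j < n" "k < n" "i \<noteq> j" "i \<noteq> k" "j \<noteq> k"
    and e: "0 < e" "e < 1" and es: "e * s \<ge> t1"
  shows "measure_pmf.expectation (Pi_pmf {..<n} 0 (\<lambda>_. p))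
      (\<lambda>d. outside_indicator {e * s..s / e} d i j k * triangle_weight s (real (d i)) (real (d j)) (real (d k)))
    \<le> 1536 * K_mom ^ 3 * e powr \<delta> * survival s ^ 3"
proof -
  let ?D = "Pi_pmf {..<n} 0 (\<lambda>_. p)"
  let ?I = "\<lambda>x. indicator {k. real k < e * s \<or> real k > s / e} x :: real"
  let ?T = "\<lambda>d a b c. ?I (d a) * triangle_weight s (real (d a)) (real (d b)) (real (d c))"
  have tw_bounds: "0 \<le> triangle_weight s (real a) (real b) (real c)" "triangle_weight s (real a) (real b) (real c) \<le> 1"
    for a b c by (simp_all add: triangle_weight_nonneg triangle_weight_le_1)
  have int_T: "integrable ?D (\<lambda>d. ?T d a b c)" for a b c
    by (rule integrable_pmf_bounded[where B = 1]) (use tw_bounds in \<open>auto simp: abs_le_iff indicator_def\<close>)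
  have int_O: "integrable ?D (\<lambda>d. outside_indicator {e * s..s / e} d i j k
      * triangle_weight s (real (d i)) (real (d j)) (real (d k)))"
    by (rule integrable_pmf_bounded[where B = 1]) (use tw_bounds in \<open>auto simp: abs_le_iff outside_indicator_def\<close>)
  have "outside_indicator {e * s..s / e} d i j k * triangle_weight s (real (d i)) (real (d j)) (real (d k))
      \<le> ?T d i j k + ?T d j i k + ?T d k i j" for d
    using tw_bounds[of "d i" "d j" "d k"] triangle_weight_perm[of s "real (d i)" "real (d j)" "real (d k)"]
    by (auto simp: outside_indicator_def indicator_def distrib_right[symmetric])
  hence "measure_pmf.expectation ?D (\<lambda>d. outside_indicator {e * s..s / e} d i j k
        * triangle_weight s (real (d i)) (real (d j)) (real (d k)))
      \<le> measure_pmf.expectation ?D (\<lambda>d. ?T d i j k + ?T d j i k + ?T d k i j)"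
    by (intro integral_mono int_O Bochner_Integration.integrable_add int_T)
  also have "\<dots> = measure_pmf.expectation ?D (\<lambda>d. ?T d i j k) + measure_pmf.expectation ?D (\<lambda>d. ?T d j i k)
      + measure_pmf.expectation ?D (\<lambda>d. ?T d k i j)"
    by (simp add: Bochner_Integration.integral_add int_T)
  also have "\<dots> \<le> 512 * K_mom ^ 3 * e powr \<delta> * survival s ^ 3 + 512 * K_mom ^ 3 * e powr \<delta> * survival s ^ 3
      + 512 * K_mom ^ 3 * e powr \<delta> * survival s ^ 3"
    using ijk by (intro add_mono expectation_outside_triangle_weight_le[OF _ _ _ _ _ _ e es]) auto
  finally show ?thesis by (simp add: mult_ac)
qed

lemma expected_tri_out_le:
  assumes e: "0 < e" "e < 1" and mun: "\<mu> * real n \<ge> 20" and es: "e * sqrt (\<mu> * real n) \<ge> t1"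
  shows "measure_pmf.expectation (cm_model n p) (\<lambda>(d, m). tri_out \<mu> n e d m)
    \<le> real n ^ 3 * (1536 * K_mom ^ 3 * e powr \<delta> * survival (sqrt (\<mu> * real n)) ^ 3)
      + real n ^ 3 * measure_pmf.prob (Pi_pmf {..<n} 0 (\<lambda>_. p)) {d. real (\<Sum>i<n. d i) < \<mu> * real n / 2}"
proof -
  define s where "s = sqrt (\<mu> * real n)"
  let ?D = "Pi_pmf {..<n} 0 (\<lambda>_. p)"
  let ?Low = "{d. real (\<Sum>i<n. d i) < \<mu> * real n / 2}"
  let ?OT = "\<lambda>d i j k. outside_indicator (Bn \<mu> n e) d i j k * triangle_weight s (real (d i)) (real (d j)) (real (d k))"
  have Bn_eq: "Bn \<mu> n e = {e * s..s / e}" by (simp add: Bn_def s_def)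
  have int_OT: "integrable ?D (\<lambda>d. ?OT d i j k)" for i j k
    by (rule integrable_pmf_bounded[where B = 1])
       (auto simp: abs_le_iff outside_indicator_def triangle_weight_nonneg triangle_weight_le_1)
  have int_avg: "integrable ?D (\<lambda>d. matching_average n d (tri_out \<mu> n e d))"
    by (rule integrable_pmf_bounded[where B = "real n ^ 3"])
       (use matching_average_mono[of "\<lambda>_. 0" _ n] matching_average_mono[of _ "\<lambda>_. real n ^ 3" n]
         tri_out_nonneg tri_out_le_cube in \<open>fastforce simp: abs_le_iff\<close>)
  have int_sum: "integrable ?D (\<lambda>d. \<Sum>i<n. \<Sum>j\<in>{i<..<n}. \<Sum>k\<in>{j<..<n}. ?OT d i j k)"
    by (intro Bochner_Integration.integrable_sum int_OT)
  have int_low: "integrable ?D (\<lambda>d. real n ^ 3 * indicator ?Low d)"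
    by (rule integrable_pmf_bounded[where B = "real n ^ 3"]) (simp add: indicator_def)
  have "measure_pmf.expectation (cm_model n p) (\<lambda>(d, m). tri_out \<mu> n e d m)
      = measure_pmf.expectation ?D (\<lambda>d. matching_average n d (tri_out \<mu> n e d))"
    by (rule expectation_cm_model[where B = "real n ^ 3"]) (simp_all add: tri_out_nonneg tri_out_le_cube)
  also have "\<dots> \<le> measure_pmf.expectation ?D (\<lambda>d. (\<Sum>i<n. \<Sum>j\<in>{i<..<n}. \<Sum>k\<in>{j<..<n}. ?OT d i j k)
      + real n ^ 3 * indicator ?Low d)"
    using matching_average_tri_out_le[OF mun mu_pos, folded s_def]
    by (intro integral_mono int_avg Bochner_Integration.integrable_add int_sum int_low)
  also have "\<dots> = (\<Sum>i<n. \<Sum>j\<in>{i<..<n}. \<Sum>k\<in>{j<..<n}. measure_pmf.expectation ?D (\<lambda>d. ?OT d i j k))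
      + real n ^ 3 * measure_pmf.prob ?D ?Low"
    unfolding Bochner_Integration.integral_add[OF int_sum int_low] expectation_sum_triples[OF int_OT] by simp
  also have "(\<Sum>i<n. \<Sum>j\<in>{i<..<n}. \<Sum>k\<in>{j<..<n}. measure_pmf.expectation ?D (\<lambda>d. ?OT d i j k))
      \<le> real n ^ 3 * (1536 * K_mom ^ 3 * e powr \<delta> * survival s ^ 3)"
    by (rule sum_triples_le) (use expectation_outside_triple_le[OF _ _ _ _ _ _ e, of _ n] es K_mom_pos
        survival_nonneg in \<open>auto simp: Bn_eq s_def\<close>)
  finally show ?thesis by (simp add: s_def)
qed

end

section \<open>The total degree is rarely small\<close>

context regularly_varying_degrees
begin

lemma ex_truncated_mean_ge: "\<exists>K::real. K > 0 \<and> measure_pmf.expectation p (\<lambda>d. min (real d) K) \<ge> 3 / 4 * \<mu>"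
proof -
  have "(\<lambda>i::nat. measure_pmf.expectation p (\<lambda>d. min (real d) (real i))) \<longlonglongrightarrow> measure_pmf.expectation p (\<lambda>d. real d)"
  proof (rule integral_dominated_convergence[where w = "\<lambda>d. real d"])
    show "AE x in measure_pmf p. (\<lambda>i. min (real x) (real i)) \<longlonglongrightarrow> real x"
    proof (rule AE_I2)
      fix x :: nat
      have "eventually (\<lambda>i. min (real x) (real i) = real x) sequentially"
        by (rule eventually_sequentiallyI[of x]) simp
      thus "(\<lambda>i. min (real x) (real i)) \<longlonglongrightarrow> real x" by (rule tendsto_eventually)
    qed
  qed (auto intro: integrable_degree)
  hence "(\<lambda>i::nat. measure_pmf.expectation p (\<lambda>d. min (real d) (real i))) \<longlonglongrightarrow> \<mu>"
    using mu by simp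
  moreover have "3 / 4 * \<mu> < \<mu>" using mu_pos by simp
  ultimately have "eventually (\<lambda>i. measure_pmf.expectation p (\<lambda>d. min (real d) (real i)) > 3 / 4 * \<mu>) sequentially"
    by (rule order_tendstoD(1))
  then obtain i :: nat where "measure_pmf.expectation p (\<lambda>d. min (real d) (real i)) > 3 / 4 * \<mu>" "i \<ge> 1"
    using eventually_conj[OF _ eventually_ge_at_top[of 1]] eventually_happens' by (metis (mono_tags, lifting) eventually_sequentially order.refl)
  thus ?thesis by (intro exI[of _ "real i"]) auto
qed

text \<open>Hoeffding's inequality for the degrees truncated at \<open>K\<close>.\<close>
lemma low_total_degree_prob_le_exp:
  assumes K: "K > 0" "measure_pmf.expectation p (\<lambda>d. min (real d) K) \<ge> 3 / 4 * \<mu>" and n: "n \<ge> 1"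
  shows "measure_pmf.prob (Pi_pmf {..<n} 0 (\<lambda>_. p)) {d. real (\<Sum>i<n. d i) < \<mu> * real n / 2}
    \<le> exp (- (\<mu>\<^sup>2 / (8 * K\<^sup>2)) * real n)"
proof -
  let ?D = "Pi_pmf {..<n} 0 (\<lambda>_. p)"
  define X where "X = (\<lambda>i (d :: nat \<Rightarrow> nat). min (real (d i)) K)"
  define m where "m = (\<Sum>i<n. measure_pmf.expectation ?D (X i))"
  have "measure_pmf.expectation ?D (X i) = measure_pmf.expectation p (\<lambda>d. min (real d) K)" if "i < n" for i
  proof -
    have "measure_pmf.expectation ?D (X i) = measure_pmf.expectation (map_pmf (\<lambda>f. f i) ?D) (\<lambda>d. min (real d) K)"
      by (simp add: X_def)
    also have "map_pmf (\<lambda>f. f i) ?D = p" using that by (simp add: Pi_pmf_component)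
    finally show ?thesis .
  qed
  hence m: "m \<ge> 3 / 4 * \<mu> * real n"
    using K n by (simp add: m_def mult.commute)
  interpret H: Hoeffding_ineq "measure_pmf ?D" "{..<n}" X "\<lambda>_. 0" "\<lambda>_. K" m
  proof unfold_locales
    have "prob_space.indep_vars (measure_pmf ?D) (\<lambda>_. count_space UNIV) (\<lambda>x f. f x) {..<n}"
      by (rule indep_vars_Pi_pmf) simp
    from prob_space.indep_vars_compose2[OF prob_space_measure_pmf this, of "\<lambda>_ k. min (real k) K" "\<lambda>_. borel"]
    show "prob_space.indep_vars (measure_pmf ?D) (\<lambda>_. borel) X {..<n}" by (simp add: X_def)
    show "AE x in measure_pmf ?D. X i x \<in> {0..K}" for i using K by (auto simp: X_def)
  qed (simp_all add: m_def)
  have "measure_pmf.prob ?D {d. real (\<Sum>i<n. d i) < \<mu> * real n / 2}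
      \<le> measure_pmf.prob ?D {x \<in> space (measure_pmf ?D). (\<Sum>i<n. X i x) \<le> m - \<mu> * real n / 4}"
  proof (rule measure_pmf.finite_measure_mono)
    show "{d. real (\<Sum>i<n. d i) < \<mu> * real n / 2}
        \<subseteq> {x \<in> space (measure_pmf ?D). (\<Sum>i<n. X i x) \<le> m - \<mu> * real n / 4}"
    proof safe
      fix d :: "nat \<Rightarrow> nat" assume "real (\<Sum>i<n. d i) < \<mu> * real n / 2"
      moreover have "(\<Sum>i<n. X i d) \<le> real (\<Sum>i<n. d i)" by (simp add: X_def sum_mono)
      ultimately show "(\<Sum>i<n. X i d) \<le> m - \<mu> * real n / 4" using m by linarith
    qed simp
  qed simp
  also have "\<dots> \<le> exp (- 2 * (\<mu> * real n / 4)\<^sup>2 / (\<Sum>i<n. (K - 0)\<^sup>2))"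
    by (rule H.Hoeffding_ineq_le) (use mu_pos K n in auto)
  also have "- 2 * (\<mu> * real n / 4)\<^sup>2 / (\<Sum>i<n. (K - 0)\<^sup>2) = - (\<mu>\<^sup>2 / (8 * K\<^sup>2)) * real n"
    using K n by (simp add: power2_eq_square field_simps)
  finally show ?thesis .
qed

lemma low_total_degree_prob_le:
  "\<exists>c>0. \<forall>n\<ge>1. measure_pmf.prob (Pi_pmf {..<n} 0 (\<lambda>_. p)) {d. real (\<Sum>i<n. d i) < \<mu> * real n / 2}
    \<le> exp (- c * real n)"
proof -
  obtain K :: real where K: "K > 0" "measure_pmf.expectation p (\<lambda>d. min (real d) K) \<ge> 3 / 4 * \<mu>"
    using ex_truncated_mean_ge by blast
  moreover have "\<mu>\<^sup>2 / (8 * K\<^sup>2) > 0" using K mu_pos by simp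
  ultimately show ?thesis using low_total_degree_prob_le_exp by blast
qed

end

lemma power4_exp_tendsto_0:
  fixes c :: real assumes c: "c > 0"
  shows "(\<lambda>n::nat. real n ^ 4 * exp (- c * real n)) \<longlonglongrightarrow> 0"
proof -
  have "filterlim (\<lambda>n::nat. c * real n) at_top sequentially"
    by (rule filterlim_tendsto_pos_mult_at_top[OF tendsto_const c filterlim_real_sequentially])
  hence "(\<lambda>n::nat. (c * real n) ^ 4 / exp (c * real n) / c ^ 4) \<longlonglongrightarrow> 0 / c ^ 4"
    by (intro tendsto_divide tendsto_const filterlim_compose[OF tendsto_power_div_exp_0]) (use c in auto)
  moreover have "(\<lambda>n::nat. (c * real n) ^ 4 / exp (c * real n) / c ^ 4) = (\<lambda>n. real n ^ 4 * exp (- c * real n))"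
    using c by (auto simp: exp_minus field_simps power_mult_distrib)
  ultimately show ?thesis by simp
qed

context regularly_varying_degrees
begin

lemma L_cube_normalisation:
  assumes n: "n > 0"
  defines "s \<equiv> sqrt (\<mu> * real n)"
  shows "L s ^ 3 * real n powr (3 / 2 * (2 - \<gamma>)) = survival s ^ 3 * \<mu> powr (3 * \<gamma> / 2) * real n ^ 3"
proof -
  have mun: "\<mu> * real n > 0" using n mu_pos by simp
  hence spos: "s > 0" by (simp add: s_def)
  have "s powr (3 * \<gamma>) = (\<mu> * real n) powr (3 * \<gamma> / 2)"
    using mun by (simp add: s_def powr_half_sqrt[symmetric] powr_powr)
  also have "\<dots> = \<mu> powr (3 * \<gamma> / 2) * real n powr (3 * \<gamma> / 2)" by (rule powr_mult)
  finally have s3: "s powr (3 * \<gamma>) = \<mu> powr (3 * \<gamma> / 2) * real n powr (3 * \<gamma> / 2)" .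
  have "real n powr (3 * \<gamma> / 2) * real n powr (3 / 2 * (2 - \<gamma>)) = real n powr 3"
    by (simp add: powr_add[symmetric] field_simps)
  also have "\<dots> = real n ^ 3" using n by (simp add: powr_realpow)
  finally have n3: "real n powr (3 * \<gamma> / 2) * real n powr (3 / 2 * (2 - \<gamma>)) = real n ^ 3" .
  have "L s ^ 3 = survival s ^ 3 * s powr (3 * \<gamma>)"
    using L_eq_survival[OF spos] spos by (simp add: power_mult_distrib powr_realpow[symmetric] powr_powr mult.commute)
  thus ?thesis using s3 n3 by (simp add: mult_ac)
qed

lemma L_cube_ge:
  assumes "s \<ge> t0"
  shows "L s ^ 3 \<ge> c_low ^ 3 / s"
proof -
  have spos: "s > 0" and s1: "s \<ge> 1" using assms t0_ge_1 by auto
  have "L s \<ge> c_low * s powr (- (\<gamma> + \<delta>)) * s powr \<gamma>"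
    using survival_ge_power[OF assms] L_eq_survival[OF spos] by (simp add: mult_right_mono)
  also have "c_low * s powr (- (\<gamma> + \<delta>)) * s powr \<gamma> = c_low * s powr (- \<delta>)"
    using spos by (simp add: mult.assoc powr_add[symmetric])
  finally have "L s ^ 3 \<ge> (c_low * s powr (- \<delta>)) ^ 3" by (rule power_mono) (use c_low_pos in simp)
  also have "(c_low * s powr (- \<delta>)) ^ 3 = c_low ^ 3 * s powr (- 3 * \<delta>)"
    using spos by (simp add: power_mult_distrib powr_power)
  also have "c_low ^ 3 * s powr (- 3 * \<delta>) \<ge> c_low ^ 3 * s powr (- 1)"
    by (intro mult_left_mono powr_mono) (use s1 delta_le_two_minus_gamma gamma_gt_1 c_low_pos in auto)
  finally show ?thesis using spos by (simp add: powr_minus_divide)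
qed

definition A_tri :: real where "A_tri = 1536 * K_mom ^ 3 * \<mu> powr (- 3 * \<gamma> / 2)"

lemma A_tri_pos: "A_tri > 0"
  using K_mom_pos mu_pos by (simp add: A_tri_def)

lemma normalised_main_term_eq:
  assumes n: "n > 0"
  defines "s \<equiv> sqrt (\<mu> * real n)"
  shows "real n ^ 3 * (1536 * K_mom ^ 3 * e powr \<delta> * survival s ^ 3)
      / (L s ^ 3 * real n powr (3 / 2 * (2 - \<gamma>))) = A_tri * e powr \<delta>"
  unfolding L_cube_normalisation[OF n, folded s_def] A_tri_def
  using survival_pos[of s] n mu_pos by (simp add: powr_minus field_simps)

text \<open>The error from a small total degree is negligible because \<open>L\<close> decays at most polynomially.\<close>
lemma normalised_error_term_le:
  assumes n: "n \<ge> 1" and mun: "\<mu> * real n \<ge> 1" and s: "sqrt (\<mu> * real n) \<ge> t0"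
    and small: "real n ^ 4 * exp (- c * real n) \<le> A_tri * e powr \<delta> * c_low ^ 3 / \<mu>"
  shows "real n ^ 3 * exp (- c * real n) / (L (sqrt (\<mu> * real n)) ^ 3 * real n powr (3 / 2 * (2 - \<gamma>)))
    \<le> A_tri * e powr \<delta>"
proof -
  define s where "s = sqrt (\<mu> * real n)"
  define Den where "Den = L s ^ 3 * real n powr (3 / 2 * (2 - \<gamma>))"
  have npos: "real n > 0" and spos: "s > 0" using n mun by (auto simp: s_def)
  have "1 \<le> s" using mun by (simp add: s_def)
  hence "s \<le> s * s" by simp
  hence s_le: "s \<le> \<mu> * real n" using mun by (simp add: s_def)
  have "Den \<ge> c_low ^ 3 / s * 1"
    unfolding Den_def using L_cube_ge[OF s[folded s_def]] c_low_pos spos n L_eq_survival[OF spos] survival_nonneg[of s]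
    by (intro mult_mono ge_one_powr_ge_zero) (use gamma_lt_2 in auto)
  moreover have "c_low ^ 3 / s \<ge> c_low ^ 3 / (\<mu> * real n)"
    using s_le spos c_low_pos by (intro divide_left_mono) auto
  ultimately have Den_ge: "Den \<ge> c_low ^ 3 / (\<mu> * real n)" by linarith
  have pos: "c_low ^ 3 / (\<mu> * real n) > 0" using c_low_pos mu_pos npos by simp
  hence "Den > 0" using Den_ge by linarith
  hence "real n ^ 3 * exp (- c * real n) / Den \<le> real n ^ 3 * exp (- c * real n) / (c_low ^ 3 / (\<mu> * real n))"
    using divide_left_mono[OF Den_ge _ mult_pos_pos[OF _ pos]] by simp
  also have "\<dots> = \<mu> / c_low ^ 3 * (real n ^ 4 * exp (- c * real n))"
    using c_low_pos npos mu_pos by (simp add: field_simps power_Suc power_numeral_reduce)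
  also have "\<dots> \<le> A_tri * e powr \<delta>"
    using small c_low_pos mu_pos by (simp add: field_simps)
  finally show ?thesis by (simp add: Den_def s_def)
qed

lemma normalised_tri_out_le:
  assumes e: "0 < e" "e < 1" and n: "n \<ge> 1" and mun: "\<mu> * real n \<ge> 20" and es: "e * sqrt (\<mu> * real n) \<ge> t1"
    and low: "measure_pmf.prob (Pi_pmf {..<n} 0 (\<lambda>_. p)) {d. real (\<Sum>i<n. d i) < \<mu> * real n / 2}
      \<le> exp (- c * real n)"
    and small: "real n ^ 4 * exp (- c * real n) \<le> A_tri * e powr \<delta> * c_low ^ 3 / \<mu>"
  shows "measure_pmf.expectation (cm_model n p) (\<lambda>(d, m). tri_out \<mu> n e d m)
      / (L (sqrt (\<mu> * real n)) ^ 3 * real n powr (3 / 2 * (2 - \<gamma>))) \<le> 2 * A_tri * e powr \<delta>"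
proof -
  define s where "s = sqrt (\<mu> * real n)"
  define Den where "Den = L s ^ 3 * real n powr (3 / 2 * (2 - \<gamma>))"
  have spos: "s > 0" using mun by (simp add: s_def)
  have st0: "s \<ge> t0" using es e t1_ge spos by (smt (verit) mult_le_cancel_right1 s_def)
  have Den_pos: "Den > 0"
    unfolding Den_def using L_eq_survival[OF spos] survival_pos[of s] spos n by simp
  have "measure_pmf.expectation (cm_model n p) (\<lambda>(d, m). tri_out \<mu> n e d m)
      \<le> real n ^ 3 * (1536 * K_mom ^ 3 * e powr \<delta> * survival s ^ 3)
        + real n ^ 3 * measure_pmf.prob (Pi_pmf {..<n} 0 (\<lambda>_. p)) {d. real (\<Sum>i<n. d i) < \<mu> * real n / 2}"
    using expected_tri_out_le[OF e mun es] by (simp add: s_def)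
  also have "\<dots> \<le> real n ^ 3 * (1536 * K_mom ^ 3 * e powr \<delta> * survival s ^ 3) + real n ^ 3 * exp (- c * real n)"
    using low by (intro add_left_mono mult_left_mono) auto
  finally have "measure_pmf.expectation (cm_model n p) (\<lambda>(d, m). tri_out \<mu> n e d m) / Den
      \<le> real n ^ 3 * (1536 * K_mom ^ 3 * e powr \<delta> * survival s ^ 3) / Den + real n ^ 3 * exp (- c * real n) / Den"
    using Den_pos by (simp add: divide_right_mono add_divide_distrib[symmetric])
  also have "\<dots> \<le> A_tri * e powr \<delta> + A_tri * e powr \<delta>"
    using normalised_main_term_eq[of n e] normalised_error_term_le[OF n _ st0[unfolded s_def] small] n mun
    unfolding Den_def s_def by simp
  finally show ?thesis by (simp add: Den_def s_def)
qed

lemma eventually_normalised_tri_out_le: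
  assumes e: "0 < e" "e < 1"
  shows "eventually (\<lambda>n. measure_pmf.expectation (cm_model n p) (\<lambda>(d, m). tri_out \<mu> n e d m)
      / (L (sqrt (\<mu> * real n)) ^ 3 * real n powr (3 / 2 * (2 - \<gamma>))) \<le> 2 * A_tri * e powr \<delta>) sequentially"
proof -
  obtain c where c: "c > 0" "\<And>n. n \<ge> 1 \<Longrightarrow> measure_pmf.prob (Pi_pmf {..<n} 0 (\<lambda>_. p))
      {d. real (\<Sum>i<n. d i) < \<mu> * real n / 2} \<le> exp (- c * real n)"
    using low_total_degree_prob_le by blast
  have "A_tri * e powr \<delta> * c_low ^ 3 / \<mu> > 0" using A_tri_pos c_low_pos mu_pos e by simp
  hence small: "eventually (\<lambda>n. real n ^ 4 * exp (- c * real n) < A_tri * e powr \<delta> * c_low ^ 3 / \<mu>) sequentially"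
    by (rule order_tendstoD(2)[OF power4_exp_tendsto_0[OF c(1)]])
  have large: "eventually (\<lambda>n. n \<ge> 1 \<and> \<mu> * real n \<ge> 20 \<and> e * sqrt (\<mu> * real n) \<ge> t1) sequentially"
  proof -
    have "filterlim (\<lambda>n. e * sqrt (\<mu> * real n)) at_top sequentially"
      using e mu_pos by real_asymp
    moreover have "filterlim (\<lambda>n. \<mu> * real n) at_top sequentially"
      using mu_pos by real_asymp
    ultimately show ?thesis
      by (intro eventually_conj eventually_ge_at_top) (auto simp: filterlim_at_top)
  qed
  show ?thesis
    using eventually_conj[OF small large]
  proof eventually_elim
    case (elim n)
    thus ?case by (intro normalised_tri_out_le[OF e, where c = c] c(2)) auto
  qed
qed

lemma limsup_normalised_tri_out_le:
  assumes e: "0 < e" "e < 1"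
  shows "limsup (\<lambda>n. ereal (measure_pmf.expectation (cm_model n p) (\<lambda>(d, m). tri_out \<mu> n e d m)
      / (L (sqrt (\<mu> * real n)) ^ 3 * real n powr (3 / 2 * (2 - \<gamma>))))) \<le> ereal (2 * A_tri * e powr \<delta>)"
  by (rule Limsup_bounded) (use eventually_normalised_tri_out_le[OF e] in \<open>auto elim: eventually_mono\<close>)

end

theorem lemma4p2:
  fixes p :: "nat pmf" and L :: "real \<Rightarrow> real" and \<gamma> \<mu> :: real
  assumes tail: "\<forall>t>0. measure_pmf.prob p {k. real k > t} = L t * t powr (- \<gamma>)"
    and sv: "slowly_varying L"
    and gam: "1 < \<gamma>" "\<gamma> < 2"
    and mu: "\<mu> = measure_pmf.expectation p real"
  shows "\<exists>E1 :: real \<Rightarrow> real. (E1 \<longlongrightarrow> 0) (at_right 0) \<and>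
           (\<exists>C \<epsilon>0. \<epsilon>0 > 0 \<and> (\<forall>\<epsilon>. 0 < \<epsilon> \<and> \<epsilon> < \<epsilon>0 \<longrightarrow>
              limsup (\<lambda>n. ereal (measure_pmf.expectation (cm_model n p) (\<lambda>(d, m). tri_out \<mu> n \<epsilon> d m)
                      / (L (sqrt (\<mu> * real n)) ^ 3 * real n powr (3 / 2 * (2 - \<gamma>)))))
              \<le> ereal (C * E1 \<epsilon>)))"
proof -
  interpret regularly_varying_degrees p L \<gamma> \<mu>
    by unfold_locales (use tail sv gam mu in auto)
  show ?thesis
  proof (intro exI conjI)
    show "((\<lambda>\<epsilon>. \<epsilon> powr \<delta>) \<longlongrightarrow> 0) (at_right 0)"
      using delta_pos by (intro tendsto_zero_powrI tendsto_ident_at tendsto_const)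
        (auto simp: eventually_at_right_less eventually_at_right_field)
    show "(1::real) > 0" by simp
    show "\<forall>\<epsilon>. 0 < \<epsilon> \<and> \<epsilon> < 1 \<longrightarrow>
        limsup (\<lambda>n. ereal (measure_pmf.expectation (cm_model n p) (\<lambda>(d, m). tri_out \<mu> n \<epsilon> d m)
          / (L (sqrt (\<mu> * real n)) ^ 3 * real n powr (3 / 2 * (2 - \<gamma>)))))
        \<le> ereal (2 * A_tri * \<epsilon> powr \<delta>)"
      using limsup_normalised_tri_out_le by blast
  qed
qed

end
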